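(* Let $\alpha,\beta$ satisfy $0<\alpha<\beta<1$ and $\beta>2\sqrt{3\alpha}$. Then $\mathsf{unitaryBQP}_\alpha\neq\mathsf{unitaryBQP}_\beta$.
   Context: A partial isometry is $U=\tilde U\Pi$ with $\Pi$ a projector and $\tilde U$ an isometry; a channel completion of $U$ is a channel $\Phi$ with $\Phi(\Pi\rho\Pi)=U\Pi\rho\Pi U^\dagger$ for all $\rho$. A unitary synthesis problem is a sequence $\mathscr U=(U_x)_{x\in\{0,1\}^*}$ of partial isometries. A circuit family $(C_x)_x$ implements $\mathscr U$ with worst-case error $\delta$ if for every $x$ there is a channel completion $\Phi_x$ of $U_x$ with $\|C_x-\Phi_x\|_\diamond\le\delta(|x|)$ (diamond norm). $\mathsf{unitaryBQP}_\delta$ is the set of unitary synthesis problems implementable with worst-case error $\delta$ by a uniform polynomial-time quantum algorithm, i.e. a family of polynomial-size general quantum circuits (gates $H,\mathit{CNOT},T$, ancilla introduction, tracing out, standard-basis measurement) whose descriptions are computed from $x$ by a classical polynomial-time Turing machine. *)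

theory Defs
  imports "Jordan_Normal_Form.Matrix" Complex_Main
begin

definition adj :: "complex mat \<Rightarrow> complex mat" where
  "adj A = mat (dim_col A) (dim_row A) (\<lambda>(i,j). cnj (A $$ (j,i)))"

definition mtrace :: "complex mat \<Rightarrow> complex" where
  "mtrace A = (\<Sum>i<dim_row A. A $$ (i,i))"

definition cvec_conj :: "complex vec \<Rightarrow> complex vec" where
  "cvec_conj v = vec (dim_vec v) (\<lambda>i. cnj (v $ i))"

definition isometry :: "nat \<Rightarrow> nat \<Rightarrow> complex mat \<Rightarrow> bool" where
  "isometry dout din V \<longleftrightarrow> V \<in> carrier_mat dout din \<and> adj V * V = 1\<^sub>m din"

definition projector :: "nat \<Rightarrow> complex mat \<Rightarrow> bool" where
  "projector d P \<longleftrightarrow> P \<in> carrier_mat d d \<and> adj P = P \<and> P * P = P"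

definition partial_isometry :: "nat \<Rightarrow> nat \<Rightarrow> complex mat \<Rightarrow> bool" where
  "partial_isometry dout din U \<longleftrightarrow>
     (\<exists>Ut P. isometry dout din Ut \<and> projector din P \<and> U = Ut * P)"

definition psd :: "nat \<Rightarrow> complex mat \<Rightarrow> bool" where
  "psd d P \<longleftrightarrow> P \<in> carrier_mat d d \<and>
     (\<forall>v \<in> carrier_vec d. Im (cvec_conj v \<bullet> (P *\<^sub>v v)) = 0 \<and> Re (cvec_conj v \<bullet> (P *\<^sub>v v)) \<ge> 0)"

definition density :: "nat \<Rightarrow> complex mat \<Rightarrow> bool" where
  "density d \<rho> \<longleftrightarrow> psd d \<rho> \<and> mtrace \<rho> = 1"

text \<open>Trace norm: tr |A| with |A| = sqrt(A^dagger A) the unique psd square root.\<close>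
definition trace_norm :: "complex mat \<Rightarrow> real" where
  "trace_norm A = Re (mtrace (THE P. psd (dim_col A) P \<and> P * P = adj A * A))"

text \<open>Block (i,j) with respect to the ancilla (ordering system (x) ancilla, index a*k+i).\<close>
definition block :: "nat \<Rightarrow> nat \<Rightarrow> nat \<Rightarrow> nat \<Rightarrow> complex mat \<Rightarrow> complex mat" where
  "block d k i j \<rho> = mat d d (\<lambda>(a,b). \<rho> $$ (a*k+i, b*k+j))"

text \<open>The map Phi (x) id_k applied to a (din*k)x(din*k) matrix.\<close>
definition ext :: "nat \<Rightarrow> nat \<Rightarrow> nat \<Rightarrow> (complex mat \<Rightarrow> complex mat) \<Rightarrow> complex mat \<Rightarrow> complex mat" where
  "ext din dout k \<Phi> \<rho> =
     mat (dout*k) (dout*k) (\<lambda>(r,s). \<Phi> (block din k (r mod k) (s mod k) \<rho>) $$ (r div k, s div k))"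

definition is_channel :: "nat \<Rightarrow> nat \<Rightarrow> (complex mat \<Rightarrow> complex mat) \<Rightarrow> bool" where
  "is_channel din dout \<Phi> \<longleftrightarrow>
     (\<forall>A \<in> carrier_mat din din. \<Phi> A \<in> carrier_mat dout dout) \<and>
     (\<forall>A \<in> carrier_mat din din. \<forall>B \<in> carrier_mat din din. \<Phi> (A + B) = \<Phi> A + \<Phi> B) \<and>
     (\<forall>A \<in> carrier_mat din din. \<forall>c. \<Phi> (c \<cdot>\<^sub>m A) = c \<cdot>\<^sub>m \<Phi> A) \<and>
     (\<forall>A \<in> carrier_mat din din. mtrace (\<Phi> A) = mtrace A) \<and>
     (\<forall>k \<rho>. k \<ge> 1 \<longrightarrow> psd (din*k) \<rho> \<longrightarrow> psd (dout*k) (ext din dout k \<Phi> \<rho>))"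

definition diamond_norm :: "nat \<Rightarrow> nat \<Rightarrow> (complex mat \<Rightarrow> complex mat) \<Rightarrow> real" where
  "diamond_norm din dout \<Theta> =
     Sup {trace_norm (ext din dout k \<Theta> X) | k X.
            k \<ge> 1 \<and> X \<in> carrier_mat (din*k) (din*k) \<and> trace_norm X \<le> 1}"

definition channel_completion ::
  "nat \<Rightarrow> nat \<Rightarrow> complex mat \<Rightarrow> (complex mat \<Rightarrow> complex mat) \<Rightarrow> bool" where
  "channel_completion din dout U \<Phi> \<longleftrightarrow> is_channel din dout \<Phi> \<and>
     (\<exists>Ut P. isometry dout din Ut \<and> projector din P \<and> U = Ut * P \<and>
        (\<forall>\<rho> \<in> carrier_mat din din. \<Phi> (P * \<rho> * P) = U * P * \<rho> * P * adj U))"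

text \<open>x maps to (n, m, U_x) with U_x a partial isometry from n qubits to m qubits.\<close>
type_synonym usp = "bool list \<Rightarrow> nat \<times> nat \<times> complex mat"

definition is_usp :: "usp \<Rightarrow> bool" where
  "is_usp P \<longleftrightarrow> (\<forall>x. case P x of (n, m, U) \<Rightarrow> partial_isometry (2^m) (2^n) U)"

datatype instr = Hg nat | Tg nat | CNOTg nat nat | Anc | TraceOut nat | Meas nat

definition bitn :: "nat \<Rightarrow> nat \<Rightarrow> nat" where
  "bitn k i = (k div 2^i) mod 2"

definition Hmat :: "complex mat" where
  "Hmat = mat 2 2 (\<lambda>(a,b). if a = 1 \<and> b = 1 then - complex_of_real (1 / sqrt 2)
                             else complex_of_real (1 / sqrt 2))"

definition Tmat :: "complex mat" where
  "Tmat = mat 2 2 (\<lambda>(a,b). if a \<noteq> b then 0 else if a = 0 then 1 else cis (pi / 4))"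

text \<open>Qubit i of a basis index k of a w-qubit register is bit i of k.\<close>
definition gate1 :: "nat \<Rightarrow> nat \<Rightarrow> complex mat \<Rightarrow> complex mat" where
  "gate1 w i G = mat (2^w) (2^w) (\<lambda>(k,l).
     if (\<forall>j. j \<noteq> i \<longrightarrow> bitn k j = bitn l j) then G $$ (bitn k i, bitn l i) else 0)"

definition cnot_map :: "nat \<Rightarrow> nat \<Rightarrow> nat \<Rightarrow> nat" where
  "cnot_map c t l = (if bitn l c = 1 then (if bitn l t = 1 then l - 2^t else l + 2^t) else l)"

definition cnot_mat :: "nat \<Rightarrow> nat \<Rightarrow> nat \<Rightarrow> complex mat" where
  "cnot_mat w c t = mat (2^w) (2^w) (\<lambda>(k,l). if k = cnot_map c t l then 1 else 0)"

text \<open>Ancilla introduction: new qubit (index w) initialised to 0.\<close>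
definition anc_mat :: "nat \<Rightarrow> complex mat" where
  "anc_mat w = mat (2^(w+1)) (2^w) (\<lambda>(k,l). if k = l then 1 else 0)"

definition ins_bit :: "nat \<Rightarrow> nat \<Rightarrow> nat \<Rightarrow> nat" where
  "ins_bit k i b = k mod 2^i + b * 2^i + (k div 2^i) * 2^(i+1)"

text \<open>Kraus operators for tracing out qubit i (remaining qubits keep their order).\<close>
definition trace_kraus :: "nat \<Rightarrow> nat \<Rightarrow> nat \<Rightarrow> complex mat" where
  "trace_kraus w i b = mat (2^(w-1)) (2^w) (\<lambda>(k,l). if l = ins_bit k i b then 1 else 0)"

definition meas_kraus :: "nat \<Rightarrow> nat \<Rightarrow> nat \<Rightarrow> complex mat" where
  "meas_kraus w i b = mat (2^w) (2^w) (\<lambda>(k,l). if k = l \<and> bitn k i = b then 1 else 0)"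

fun iwidth :: "nat \<Rightarrow> instr \<Rightarrow> nat" where
  "iwidth w Anc = w + 1"
| "iwidth w (TraceOut i) = w - 1"
| "iwidth w _ = w"

fun ivalid :: "nat \<Rightarrow> instr \<Rightarrow> bool" where
  "ivalid w (Hg i) = (i < w)"
| "ivalid w (Tg i) = (i < w)"
| "ivalid w (CNOTg c t) = (c < w \<and> t < w \<and> c \<noteq> t)"
| "ivalid w Anc = True"
| "ivalid w (TraceOut i) = (i < w)"
| "ivalid w (Meas i) = (i < w)"

fun kraus :: "nat \<Rightarrow> instr \<Rightarrow> complex mat list" where
  "kraus w (Hg i) = [gate1 w i Hmat]"
| "kraus w (Tg i) = [gate1 w i Tmat]"
| "kraus w (CNOTg c t) = [cnot_mat w c t]"
| "kraus w Anc = [anc_mat w]"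
| "kraus w (TraceOut i) = [trace_kraus w i 0, trace_kraus w i 1]"
| "kraus w (Meas i) = [meas_kraus w i 0, meas_kraus w i 1]"

definition kraus_apply :: "nat \<Rightarrow> complex mat list \<Rightarrow> complex mat \<Rightarrow> complex mat" where
  "kraus_apply dout Ks \<rho> = foldr (\<lambda>K acc. K * \<rho> * adj K + acc) Ks (0\<^sub>m dout dout)"

definition apply_instr :: "nat \<Rightarrow> instr \<Rightarrow> complex mat \<Rightarrow> complex mat" where
  "apply_instr w g \<rho> = kraus_apply (2^(iwidth w g)) (kraus w g) \<rho>"

fun cvalid :: "nat \<Rightarrow> instr list \<Rightarrow> bool" where
  "cvalid w [] = True"
| "cvalid w (g # gs) = (ivalid w g \<and> cvalid (iwidth w g) gs)"

fun cwidth :: "nat \<Rightarrow> instr list \<Rightarrow> nat" where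
  "cwidth w [] = w"
| "cwidth w (g # gs) = cwidth (iwidth w g) gs"

fun capply :: "nat \<Rightarrow> instr list \<Rightarrow> complex mat \<Rightarrow> complex mat" where
  "capply w [] \<rho> = \<rho>"
| "capply w (g # gs) \<rho> = capply (iwidth w g) gs (apply_instr w g \<rho>)"

definition enc_nat :: "nat \<Rightarrow> bool list" where
  "enc_nat k = concat (replicate k [True, True]) @ [False, False]"

fun enc_instr :: "instr \<Rightarrow> bool list" where
  "enc_instr (Hg i) = enc_nat 0 @ enc_nat i"
| "enc_instr (Tg i) = enc_nat 1 @ enc_nat i"
| "enc_instr (CNOTg c t) = enc_nat 2 @ enc_nat c @ enc_nat t"
| "enc_instr Anc = enc_nat 3"
| "enc_instr (TraceOut i) = enc_nat 4 @ enc_nat i"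
| "enc_instr (Meas i) = enc_nat 5 @ enc_nat i"

text \<open>A circuit description: number of input qubits and instruction list.\<close>
definition enc_circ :: "nat \<times> instr list \<Rightarrow> bool list" where
  "enc_circ c = enc_nat (fst c) @ concat (map enc_instr (snd c))"

datatype dir = Lft | Rgt | Stay

text \<open>(number of states, number of tape symbols, transition function).
  Start state 0, halting state 1; blank symbol 0, bit False = 1, bit True = 2.\<close>
type_synonym tm = "nat \<times> nat \<times> (nat \<Rightarrow> nat \<Rightarrow> nat \<times> nat \<times> dir)"

type_synonym config = "nat \<times> nat \<times> (nat \<Rightarrow> nat)"

definition wf_tm :: "tm \<Rightarrow> bool" where
  "wf_tm M = (case M of (Q, G, \<delta>) \<Rightarrow> Q \<ge> 2 \<and> G \<ge> 3 \<and>
     (\<forall>q < Q. \<forall>a < G. fst (\<delta> q a) < Q \<and> fst (snd (\<delta> q a)) < G))"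

definition tm_step :: "tm \<Rightarrow> config \<Rightarrow> config" where
  "tm_step M c = (case M of (Q, G, \<delta>) \<Rightarrow> case c of (q, h, tp) \<Rightarrow>
     if q = 1 then c else
       (case \<delta> q (tp h) of (q', a', d) \<Rightarrow>
          (q', (case d of Lft \<Rightarrow> h - 1 | Rgt \<Rightarrow> h + 1 | Stay \<Rightarrow> h), tp(h := a'))))"

definition tm_init :: "bool list \<Rightarrow> config" where
  "tm_init x = (0, 0, \<lambda>i. if i < length x then (if x ! i then 2 else 1) else 0)"

text \<open>Output: the bits written from cell 0 up to the first non-bit cell.\<close>
definition tm_output :: "(nat \<Rightarrow> nat) \<Rightarrow> bool list" where
  "tm_output tp = map (\<lambda>i. tp i = 2) [0..<(LEAST j. tp j \<noteq> 1 \<and> tp j \<noteq> 2)]"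

definition computes_in_time :: "tm \<Rightarrow> (bool list \<Rightarrow> bool list) \<Rightarrow> (nat \<Rightarrow> nat) \<Rightarrow> bool" where
  "computes_in_time M f T \<longleftrightarrow> (\<forall>x. \<exists>t \<le> T (length x).
      fst ((tm_step M ^^ t) (tm_init x)) = 1 \<and>
      tm_output (snd (snd ((tm_step M ^^ t) (tm_init x)))) = f x)"

definition poly_time_computable :: "(bool list \<Rightarrow> bool list) \<Rightarrow> bool" where
  "poly_time_computable f \<longleftrightarrow>
     (\<exists>M c k. wf_tm M \<and> computes_in_time M f (\<lambda>n. c * n ^ k + c))"

definition implements_with_error ::
  "(bool list \<Rightarrow> nat \<times> instr list) \<Rightarrow> usp \<Rightarrow> (nat \<Rightarrow> real) \<Rightarrow> bool" where
  "implements_with_error C P \<delta> \<longleftrightarrow> (\<forall>x. case P x of (n, m, U) \<Rightarrow>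
      fst (C x) = n \<and> cvalid n (snd (C x)) \<and> cwidth n (snd (C x)) = m \<and>
      (\<exists>\<Phi>. channel_completion (2^n) (2^m) U \<Phi> \<and>
         diamond_norm (2^n) (2^m) (\<lambda>\<rho>. capply n (snd (C x)) \<rho> - \<Phi> \<rho>) \<le> \<delta> (length x)))"

definition unitaryBQP :: "(nat \<Rightarrow> real) \<Rightarrow> usp set" where
  "unitaryBQP \<delta> = {P. is_usp P \<and>
     (\<exists>C. poly_time_computable (enc_circ \<circ> C) \<and> implements_with_error C P \<delta>)}"

end

theory Submission
  imports Defs "Jordan_Normal_Form.Spectral_Radius" "HOL-Library.Complex_Order" "HOL-Library.Countable_Set"
begin

text \<open>For \<open>0 \<le> b \<le> 2\<close> and a set \<open>S\<close> of bit strings, consider the problem of preparing, from zero input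
  qubits, the state \<open>|0\<rangle>\<close> on inputs outside \<open>S\<close> and on inputs in \<open>S\<close> a state whose projector lies at
  trace-norm distance \<open>b\<close> from \<open>|0\<rangle>\<langle>0|\<close>. The circuit that merely introduces an ancilla solves every
  such problem with error \<open>b\<close>, so \<open>unitaryBQP\<^sub>\<beta>\<close> contains uncountably many of them. The two target
  projectors differ by \<open>(b/2)\<^sup>2\<close> in their \<open>(0,0)\<close> entry, which is bounded by the trace norm, so when
  \<open>b\<^sup>2 > 8 \<alpha>\<close> a single circuit family solves at most one of these problems with error \<open>\<alpha>\<close>.
  Polynomial-time computable circuit families are countable, hence \<open>unitaryBQP\<^sub>\<alpha>\<close> contains only
  countably many of the problems.\<close>

section \<open>Sesquilinear forms and positive semidefinite matrices\<close>

definition mult_mat_fun :: "nat \<Rightarrow> complex mat \<Rightarrow> (nat \<Rightarrow> complex) \<Rightarrow> nat \<Rightarrow> complex" where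
  "mult_mat_fun n A u k = (\<Sum>l<n. A $$ (k,l) * u l)"

definition sesq_form :: "nat \<Rightarrow> complex mat \<Rightarrow> (nat \<Rightarrow> complex) \<Rightarrow> (nat \<Rightarrow> complex) \<Rightarrow> complex" where
  "sesq_form n A u w = (\<Sum>k<n. \<Sum>l<n. cnj (u k) * A $$ (k,l) * w l)"

lemma sum_lessThan_2: "(\<Sum>i<(2::nat). f i) = f 0 + f 1"
  by (simp add: numeral_2_eq_2)

lemma complex_mult_cnj_self: "cnj z * z = complex_of_real (cmod z ^ 2)"
  by (simp only: complex_norm_square mult.commute)

lemma complex_nonneg_iff: "0 \<le> z \<longleftrightarrow> z = complex_of_real (Re z) \<and> 0 \<le> Re z"
  by (auto simp: less_eq_complex_def complex_eq_iff)

lemma complex_of_real_nonneg_iff[simp]: "0 \<le> complex_of_real r \<longleftrightarrow> 0 \<le> r"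
  by (simp add: less_eq_complex_def)

lemma index_mult_mat_sum:
  assumes "A \<in> carrier_mat n m" "B \<in> carrier_mat m p" "i < n" "j < p"
  shows "(A * B) $$ (i,j) = (\<Sum>l<m. A $$ (i,l) * B $$ (l,j))"
  using assms by (auto simp: scalar_prod_def lessThan_atLeast0 intro!: sum.cong)

lemma scalar_prod_row_col:
  assumes "A \<in> carrier_mat n m" "B \<in> carrier_mat m p" "i < n" "j < p"
  shows "row A i \<bullet> col B j = (\<Sum>l<m. A $$ (i,l) * B $$ (l,j))"
  using index_mult_mat_sum[OF assms] assms by simp

lemma index_mult_mat_vec_sum:
  assumes "A \<in> carrier_mat n m" "v \<in> carrier_vec m" "i < n"
  shows "(A *\<^sub>v v) $ i = (\<Sum>l<m. A $$ (i,l) * v $ l)"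
  using assms by (auto simp: mult_mat_vec_def scalar_prod_def lessThan_atLeast0 intro!: sum.cong)

lemma adj_carrier_mat[simp]: "A \<in> carrier_mat n m \<Longrightarrow> adj A \<in> carrier_mat m n"
  unfolding adj_def by auto

lemma adj_dims[simp]: "dim_row (adj A) = dim_col A" "dim_col (adj A) = dim_row A"
  unfolding adj_def by auto

lemma index_adj[simp]: "i < dim_col A \<Longrightarrow> j < dim_row A \<Longrightarrow> adj A $$ (i,j) = cnj (A $$ (j,i))"
  unfolding adj_def by auto

lemma adj_adj[simp]: "adj (adj A) = A"
  by (rule eq_matI) (auto simp: adj_def)

lemma adj_one_mat[simp]: "adj (1\<^sub>m n) = 1\<^sub>m n"
  by (rule eq_matI) (auto simp: adj_def)

lemma adj_mult:
  assumes "A \<in> carrier_mat n m" "B \<in> carrier_mat m p"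
  shows "adj (A * B) = adj B * adj A"
proof (rule eq_matI)
  fix i j assume "i < dim_row (adj B * adj A)" "j < dim_col (adj B * adj A)"
  then have ij: "i < p" "j < n" using assms by auto
  then show "adj (A * B) $$ (i, j) = (adj B * adj A) $$ (i, j)"
    using assms index_mult_mat_sum[OF assms ij(2,1)]
      index_mult_mat_sum[OF adj_carrier_mat[OF assms(2)] adj_carrier_mat[OF assms(1)] ij]
    by (simp add: cnj_sum mult.commute)
qed (use assms in auto)

lemma sesq_form_eq_sum_mult_mat_fun:
  "sesq_form n A w u = (\<Sum>k<n. cnj (w k) * mult_mat_fun n A u k)"
  unfolding sesq_form_def mult_mat_fun_def by (simp add: sum_distrib_left mult.assoc)

lemma sesq_form_adj:
  "sesq_form n (adj A) u w = cnj (sesq_form n A w u)" if "A \<in> carrier_mat n n"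
proof -
  have "sesq_form n (adj A) u w = (\<Sum>k<n. \<Sum>l<n. cnj (u k) * cnj (A $$ (l,k)) * w l)"
    unfolding sesq_form_def using that by (intro sum.cong refl) simp
  also have "\<dots> = (\<Sum>l<n. \<Sum>k<n. cnj (u k) * cnj (A $$ (l,k)) * w l)"
    by (rule sum.swap)
  also have "\<dots> = cnj (sesq_form n A w u)"
    unfolding sesq_form_def cnj_sum by (simp add: mult_ac)
  finally show ?thesis .
qed

lemma cvec_conj_scalar_prod_eq_sesq_form:
  assumes "P \<in> carrier_mat n n" "v \<in> carrier_vec n"
  shows "cvec_conj v \<bullet> (P *\<^sub>v v) = sesq_form n P (\<lambda>k. v $ k) (\<lambda>k. v $ k)"
proof -
  have "cvec_conj v \<bullet> (P *\<^sub>v v) = (\<Sum>k<n. cnj (v $ k) * (P *\<^sub>v v) $ k)"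
    using assms unfolding cvec_conj_def scalar_prod_def by (auto simp: lessThan_atLeast0)
  also have "\<dots> = (\<Sum>k<n. cnj (v $ k) * mult_mat_fun n P (\<lambda>l. v $ l) k)"
    using assms index_mult_mat_vec_sum[OF assms] by (intro sum.cong refl) (simp add: mult_mat_fun_def)
  finally show ?thesis by (simp add: sesq_form_eq_sum_mult_mat_fun)
qed

lemma psd_iff_sesq_form:
  "psd n P \<longleftrightarrow> P \<in> carrier_mat n n \<and> (\<forall>u. 0 \<le> sesq_form n P u u)"
proof
  assume P: "psd n P"
  have "0 \<le> sesq_form n P u u" for u
  proof -
    have "sesq_form n P u u = sesq_form n P (\<lambda>k. vec n u $ k) (\<lambda>k. vec n u $ k)"
      unfolding sesq_form_def by (auto intro!: sum.cong)
    also have "\<dots> = cvec_conj (vec n u) \<bullet> (P *\<^sub>v vec n u)"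
      using P by (subst cvec_conj_scalar_prod_eq_sesq_form) (auto simp: psd_def)
    finally show ?thesis using P unfolding psd_def less_eq_complex_def by auto
  qed
  then show "P \<in> carrier_mat n n \<and> (\<forall>u. 0 \<le> sesq_form n P u u)" using P psd_def by blast
next
  assume "P \<in> carrier_mat n n \<and> (\<forall>u. 0 \<le> sesq_form n P u u)"
  then show "psd n P"
    unfolding psd_def less_eq_complex_def by (auto simp: cvec_conj_scalar_prod_eq_sesq_form)
qed

lemma psd_sesq_form_nonneg: "psd n P \<Longrightarrow> 0 \<le> sesq_form n P u u"
  by (simp add: psd_iff_sesq_form)

lemma psd_carrier_mat: "psd n P \<Longrightarrow> P \<in> carrier_mat n n"
  by (simp add: psd_def)

lemma sum_sum_delta:
  fixes f :: "nat \<Rightarrow> nat \<Rightarrow> complex"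
  assumes "i < n" "j < n"
  shows "(\<Sum>k<n. \<Sum>l<n. f k l * ((if l = i then x else 0) * (if k = j then y else 0))) = f j i * x * y"
proof -
  have "\<And>k l. f k l * ((if l = i then x else 0) * (if k = j then y else 0)) =
      (if k = j then (if l = i then f k l * x * y else 0) else 0)" by auto
  moreover have "\<And>k. (\<Sum>l<n. if k = j then (if l = i then f k l * x * y else 0) else 0)
      = (if k = j then f k i * x * y else 0)"
    using assms by (auto simp: sum.delta)
  ultimately show ?thesis using assms by (simp add: sum.delta)
qed

lemma sesq_form_two_point:
  assumes "i < n" "j < n"
  shows "sesq_form n P (\<lambda>k. (if k = i then a else 0) + (if k = j then b else 0))
                       (\<lambda>k. (if k = i then a else 0) + (if k = j then b else 0))
       = cnj a * a * P $$ (i,i) + cnj a * b * P $$ (i,j) + cnj b * a * P $$ (j,i) + cnj b * b * P $$ (j,j)"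
  using assms unfolding sesq_form_def
  by (simp add: algebra_simps sum.distrib if_distrib[of cnj] sum_sum_delta cong: if_cong)

lemma
  assumes "psd n P" "i < n" "j < n"
  shows psd_entry_swap: "P $$ (j,i) = cnj (P $$ (i,j))"
    and psd_diag_nonneg: "0 \<le> P $$ (i,i)"
proof -
  have nonneg: "Im (sesq_form n P u u) = 0 \<and> 0 \<le> Re (sesq_form n P u u)" for u
    using psd_sesq_form_nonneg[OF assms(1)] by (simp add: less_eq_complex_def)
  have ii: "Im (P $$ (i,i)) = 0 \<and> 0 \<le> Re (P $$ (i,i))"
    using nonneg[of "\<lambda>k. (if k = i then 1 else 0) + (if k = j then 0 else 0)"]
      sesq_form_two_point[OF assms(2,3), of P 1 0] by simp
  have jj: "Im (P $$ (j,j)) = 0"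
    using nonneg[of "\<lambda>k. (if k = j then 1 else 0) + (if k = i then 0 else 0)"]
      sesq_form_two_point[OF assms(3,2), of P 1 0] by simp
  have 1: "Im (P $$ (i,i) + P $$ (i,j) + P $$ (j,i) + P $$ (j,j)) = 0"
    using nonneg[of "\<lambda>k. (if k = i then 1 else 0) + (if k = j then 1 else 0)"]
      sesq_form_two_point[OF assms(2,3), of P 1 1] by simp
  have 2: "Im (P $$ (i,i) + \<i> * P $$ (i,j) - \<i> * P $$ (j,i) + P $$ (j,j)) = 0"
    using nonneg[of "\<lambda>k. (if k = i then 1 else 0) + (if k = j then \<i> else 0)"]
      sesq_form_two_point[OF assms(2,3), of P 1 \<i>] by (simp add: algebra_simps)
  show "P $$ (j,i) = cnj (P $$ (i,j))"
    using 1 2 ii jj by (intro complex_eqI) (auto simp: algebra_simps)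
  show "0 \<le> P $$ (i,i)" using ii by (simp add: less_eq_complex_def)
qed

lemma psd_adj:
  assumes "psd n P" shows "adj P = P"
proof -
  have P: "P \<in> carrier_mat n n" using assms by (rule psd_carrier_mat)
  show ?thesis
  proof (rule eq_matI)
    fix i j assume "i < dim_row P" "j < dim_col P"
    then show "adj P $$ (i, j) = P $$ (i, j)"
      using P psd_entry_swap[OF assms, of j i] by simp
  qed (use P in auto)
qed

lemma sesq_form_diff_scaled:
  "sesq_form n P (\<lambda>k. u k - t * z k) (\<lambda>k. u k - t * z k) =
    sesq_form n P u u - cnj t * sesq_form n P z u - t * sesq_form n P u z + cnj t * t * sesq_form n P z z"
  unfolding sesq_form_def by (simp add: algebra_simps sum.distrib sum_subtractf sum_distrib_left)

lemma quadratic_nonneg_imp_zero: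
  fixes N q :: real
  assumes nonneg: "\<And>t. 0 \<le> t * (t * q - 2 * N)" and "0 \<le> N" "0 \<le> q"
  shows "N = 0"
proof -
  define t where "t = N / (q + 1)"
  have "t * q \<le> N"
    using assms(2,3) unfolding t_def by (simp add: divide_simps mult_left_mono)
  moreover have "0 \<le> t" using assms(2,3) unfolding t_def by simp
  ultimately have "t * (t * q) \<le> t * N"
    by (simp add: mult_left_mono)
  then have "t * (t * q - 2 * N) \<le> - (t * N)"
    by (simp add: algebra_simps)
  then have "t * N \<le> 0"
    using nonneg[of t] by linarith
  then have "N * N / (q + 1) \<le> 0"
    unfolding t_def by (simp add: mult.commute)
  then have "N * N \<le> 0"
    using assms(3) by (simp add: divide_le_0_iff)
  then show ?thesis
    using assms(2) by (metis mult_eq_0_iff order_antisym_conv zero_le_square)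
qed

lemma psd_sesq_form_zero_imp_kernel:
  assumes P: "psd n P" and u: "sesq_form n P u u = 0" and i: "i < n"
  shows "mult_mat_fun n P u i = 0"
proof -
  define z where "z = mult_mat_fun n P u"
  define N where "N = (\<Sum>k<n. cmod (z k) ^ 2)"
  have zu: "sesq_form n P z u = of_real N"
    unfolding N_def z_def sesq_form_eq_sum_mult_mat_fun complex_mult_cnj_self by simp
  have uz: "sesq_form n P u z = of_real N"
    using sesq_form_adj[OF psd_carrier_mat[OF P], of u z] zu psd_adj[OF P] by simp
  obtain q where q: "sesq_form n P z z = of_real q" "0 \<le> q"
    using psd_sesq_form_nonneg[OF P, of z] complex_nonneg_iff by blast
  have N0: "0 \<le> N" unfolding N_def by (auto intro: sum_nonneg)
  have "0 \<le> t * (t * q - 2 * N)" for t :: real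
  proof -
    have "sesq_form n P (\<lambda>k. u k - of_real t * z k) (\<lambda>k. u k - of_real t * z k) = of_real (t * (t * q - 2 * N))"
      unfolding sesq_form_diff_scaled u zu uz q by (simp add: algebra_simps)
    then show ?thesis using psd_sesq_form_nonneg[OF P] by (metis complex_of_real_nonneg_iff)
  qed
  then have "N = 0"
    using N0 q(2) by (rule quadratic_nonneg_imp_zero)
  then show ?thesis
    using i unfolding N_def z_def by (simp add: sum_nonneg_eq_0_iff)
qed

section \<open>Square roots of positive semidefinite matrices\<close>

lemma hermitian_square_zero:
  assumes A: "A \<in> carrier_mat n n" and herm: "\<And>k l. k < n \<Longrightarrow> l < n \<Longrightarrow> cnj (A $$ (k,l)) = A $$ (l,k)"
    and sq: "\<And>k j. k < n \<Longrightarrow> j < n \<Longrightarrow> (\<Sum>l<n. A $$ (k,l) * A $$ (l,j)) = 0"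
  shows "A = 0\<^sub>m n n"
proof (rule eq_matI)
  fix l j assume "l < dim_row (0\<^sub>m n n :: complex mat)" "j < dim_col (0\<^sub>m n n :: complex mat)"
  then have lj: "l < n" "j < n" by auto
  have "(\<Sum>l<n. A $$ (j,l) * A $$ (l,j)) = of_real (\<Sum>l<n. cmod (A $$ (l,j)) ^ 2)"
    unfolding of_real_sum
  proof (intro sum.cong refl)
    fix l assume "l \<in> {..<n}"
    then have "A $$ (j,l) = cnj (A $$ (l,j))" using herm[of l j] lj by simp
    then show "A $$ (j,l) * A $$ (l,j) = of_real (cmod (A $$ (l,j)) ^ 2)"
      by (simp add: complex_mult_cnj_self)
  qed
  then have "(\<Sum>l<n. cmod (A $$ (l,j)) ^ 2) = 0"
    using sq[OF lj(2) lj(2)] by (metis of_real_eq_0_iff)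
  then show "A $$ (l,j) = 0\<^sub>m n n $$ (l,j)"
    using lj by (simp add: sum_nonneg_eq_0_iff)
qed (use A in auto)

lemma sum_triple_rotate:
  fixes F :: "nat \<Rightarrow> nat \<Rightarrow> nat \<Rightarrow> complex"
  shows "(\<Sum>j<n. \<Sum>k<n. \<Sum>l<n. F k l j) = (\<Sum>j<n. \<Sum>k<n. \<Sum>l<n. F j k l)"
proof -
  have "(\<Sum>j<n. \<Sum>k<n. \<Sum>l<n. F k l j) = (\<Sum>k<n. \<Sum>j<n. \<Sum>l<n. F k l j)"
    by (rule sum.swap)
  also have "\<dots> = (\<Sum>k<n. \<Sum>l<n. \<Sum>j<n. F k l j)"
    by (rule sum.cong[OF refl], rule sum.swap)
  finally show ?thesis .
qed

text \<open>The sum over \<open>j\<close> of both forms is \<open>tr (A P A) + tr (A Q A) = tr (A (P A + A Q)) = 0\<close>.\<close>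
lemma psd_sesq_form_columns_zero_of_anticomm:
  fixes a :: "nat \<Rightarrow> nat \<Rightarrow> complex"
  assumes P: "psd n P" and Q: "psd n Q"
    and herm: "\<And>k l. k < n \<Longrightarrow> l < n \<Longrightarrow> cnj (a k l) = a l k"
    and anticomm: "\<And>k j. k < n \<Longrightarrow> j < n \<Longrightarrow> (\<Sum>l<n. P $$ (k,l) * a l j) = - (\<Sum>l<n. a k l * Q $$ (l,j))"
    and j: "j < n"
  shows "sesq_form n P (\<lambda>k. a k j) (\<lambda>k. a k j) = 0 \<and> sesq_form n Q (\<lambda>k. a k j) (\<lambda>k. a k j) = 0"
proof -
  define c where "c j = (\<lambda>k. a k j)" for j
  have form_P: "sesq_form n P (c j) (c j) = (\<Sum>k<n. a j k * (\<Sum>l<n. P $$ (k,l) * a l j))" if "j < n" for j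
    unfolding sesq_form_def c_def
    by (rule sum.cong[OF refl]) (use herm that in \<open>auto simp: sum_distrib_left mult.assoc\<close>)
  have form_Q: "sesq_form n Q (c j) (c j) = (\<Sum>k<n. \<Sum>l<n. a j k * Q $$ (k,l) * a l j)" if "j < n" for j
    unfolding sesq_form_def c_def
    by (rule sum.cong[OF refl]) (use herm that in \<open>auto simp: sum_distrib_left mult.assoc\<close>)
  have "(\<Sum>j<n. sesq_form n P (c j) (c j)) = - (\<Sum>j<n. \<Sum>k<n. \<Sum>l<n. a j k * a k l * Q $$ (l,j))"
    using form_P anticomm by (simp add: sum_distrib_left mult.assoc sum_negf)
  also have "(\<Sum>j<n. \<Sum>k<n. \<Sum>l<n. a j k * a k l * Q $$ (l,j)) = (\<Sum>j<n. sesq_form n Q (c j) (c j))"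
    using sum_triple_rotate[of "\<lambda>k l j. a j k * a k l * Q $$ (l,j)" n] form_Q by (simp add: mult_ac)
  finally have "(\<Sum>j<n. sesq_form n P (c j) (c j) + sesq_form n Q (c j) (c j)) = 0"
    by (simp add: sum.distrib)
  then have "\<forall>j\<in>{..<n}. sesq_form n P (c j) (c j) + sesq_form n Q (c j) (c j) = 0"
    by (subst (asm) sum_nonneg_eq_0_iff)
      (auto intro: add_nonneg_nonneg psd_sesq_form_nonneg[OF P] psd_sesq_form_nonneg[OF Q])
  then show ?thesis
    using add_nonneg_eq_0_iff[OF psd_sesq_form_nonneg[OF P, of "c j"] psd_sesq_form_nonneg[OF Q, of "c j"]] j
    unfolding c_def by blast
qed

text \<open>With \<open>A = P - Q\<close> one has \<open>P A + A Q = P\<^sup>2 - Q\<^sup>2 = 0\<close>, so the columns of \<open>A\<close> lie in the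
  kernels of \<open>P\<close> and \<open>Q\<close>, and \<open>A\<^sup>2 = (P - Q) A = 0\<close>.\<close>
lemma psd_sqrt_unique:
  assumes P: "psd n P" and Q: "psd n Q" and PQ: "P * P = Q * Q"
  shows "P = Q"
proof -
  have Pc: "P \<in> carrier_mat n n" and Qc: "Q \<in> carrier_mat n n"
    using P Q by (simp_all add: psd_carrier_mat)
  define A where "A = P - Q"
  have Ac: "A \<in> carrier_mat n n" unfolding A_def using Qc by (rule minus_carrier_mat)
  define a where "a k l = A $$ (k,l)" for k l
  have a_PQ: "a k l = P $$ (k,l) - Q $$ (k,l)" if "k < n" "l < n" for k l
    unfolding a_def A_def using Pc Qc that by simp
  have herm: "cnj (a k l) = a l k" if "k < n" "l < n" for k l
    using psd_entry_swap[OF P that] psd_entry_swap[OF Q that] a_PQ that by simp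
  have anticomm: "(\<Sum>l<n. P $$ (k,l) * a l j) = - (\<Sum>l<n. a k l * Q $$ (l,j))" if "k < n" "j < n" for k j
  proof -
    have "(P * P) $$ (k,j) = (Q * Q) $$ (k,j)" using PQ by simp
    then have "(\<Sum>l<n. P $$ (k,l) * P $$ (l,j)) = (\<Sum>l<n. Q $$ (k,l) * Q $$ (l,j))"
      using index_mult_mat_sum[OF Pc Pc that] index_mult_mat_sum[OF Qc Qc that] by simp
    then show ?thesis using that
      by (simp add: a_PQ algebra_simps sum_subtractf sum.distrib eq_neg_iff_add_eq_0)
  qed
  note zero = psd_sesq_form_columns_zero_of_anticomm[OF P Q herm anticomm]
  have "(\<Sum>l<n. a k l * a l j) = 0" if "k < n" "j < n" for k j
  proof -
    have "(\<Sum>l<n. a k l * a l j) = mult_mat_fun n P (\<lambda>k. a k j) k - mult_mat_fun n Q (\<lambda>k. a k j) k"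
      unfolding mult_mat_fun_def using that by (simp add: a_PQ algebra_simps sum_subtractf)
    then show ?thesis
      using psd_sesq_form_zero_imp_kernel[OF P] psd_sesq_form_zero_imp_kernel[OF Q] zero that
      by simp
  qed
  then have "A = 0\<^sub>m n n"
    using hermitian_square_zero[OF Ac] herm unfolding a_def by blast
  then have "a i j = 0" if "i < n" "j < n" for i j
    using that unfolding a_def by simp
  then show ?thesis
    by (intro eq_matI) (use Pc Qc a_PQ in auto)
qed

lemma sesq_form_mult_right:
  assumes "X \<in> carrier_mat n n" "Y \<in> carrier_mat n n"
  shows "sesq_form n (X * Y) u v = sesq_form n X u (mult_mat_fun n Y v)"
proof -
  have "sesq_form n (X * Y) u v = (\<Sum>k<n. \<Sum>l<n. \<Sum>m<n. cnj (u k) * X $$ (k,m) * Y $$ (m,l) * v l)"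
    unfolding sesq_form_def using assms
    by (intro sum.cong refl) (simp add: scalar_prod_row_col[OF assms] sum_distrib_left sum_distrib_right mult.assoc)
  also have "\<dots> = (\<Sum>k<n. \<Sum>m<n. \<Sum>l<n. cnj (u k) * X $$ (k,m) * Y $$ (m,l) * v l)"
    by (intro sum.cong refl sum.swap)
  also have "\<dots> = sesq_form n X u (mult_mat_fun n Y v)"
    unfolding sesq_form_def mult_mat_fun_def by (simp add: sum_distrib_left mult.assoc)
  finally show ?thesis .
qed

lemma sesq_form_mult_left:
  assumes X: "X \<in> carrier_mat n n" and Y: "Y \<in> carrier_mat n n" and herm: "adj X = X"
  shows "sesq_form n (X * Y) u v = sesq_form n Y (mult_mat_fun n X u) v"
proof -
  have "adj (adj Y * X) = X * Y"
    using adj_mult[OF adj_carrier_mat[OF Y] X] herm by simp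
  then have "sesq_form n (X * Y) u v = cnj (sesq_form n (adj Y * X) v u)"
  proof -
    have "adj Y * X \<in> carrier_mat n n" using X Y by (metis adj_carrier_mat mult_carrier_mat)
    from sesq_form_adj[OF this, of u v] show ?thesis using \<open>adj (adj Y * X) = X * Y\<close> by simp
  qed
  also have "\<dots> = cnj (sesq_form n (adj Y) v (mult_mat_fun n X u))"
    using X Y by (simp add: sesq_form_mult_right)
  also have "\<dots> = sesq_form n Y (mult_mat_fun n X u) v"
    using sesq_form_adj[OF Y] by simp
  finally show ?thesis .
qed

lemma psd_hermitian_conj:
  assumes H: "H \<in> carrier_mat n n" "adj H = H" and B: "psd n B"
  shows "psd n (H * B * H)"
  unfolding psd_iff_sesq_form
proof (intro conjI allI)
  have Bc: "B \<in> carrier_mat n n" using B by (rule psd_carrier_mat)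
  then show "H * B * H \<in> carrier_mat n n" using H by simp
  fix u
  have "sesq_form n (H * (B * H)) u u = sesq_form n B (mult_mat_fun n H u) (mult_mat_fun n H u)"
    using H Bc by (simp add: sesq_form_mult_left sesq_form_mult_right)
  moreover have "H * B * H = H * (B * H)" using H Bc by simp
  ultimately show "0 \<le> sesq_form n (H * B * H) u u"
    using psd_sesq_form_nonneg[OF B] by simp
qed

lemma exists_unit_eigenvector:
  assumes M: "M \<in> carrier_mat n n" and n: "0 < n"
  obtains e u where "\<And>i. i < n \<Longrightarrow> mult_mat_fun n M u i = e * u i" "0 \<le> u 0"
    "(\<Sum>i<n. cmod (u i)^2) = 1"
proof -
  obtain e where "e \<in> spectrum M" using spectrum_non_empty[OF M n] by blast
  then obtain v where "eigenvector M v e" unfolding spectrum_def eigenvalue_def by auto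
  then have v: "v \<in> carrier_vec n" "v \<noteq> 0\<^sub>v n" "M *\<^sub>v v = e \<cdot>\<^sub>v v"
    unfolding eigenvector_def using M by auto
  have Mv: "mult_mat_fun n M (\<lambda>l. v $ l) i = e * v $ i" if "i < n" for i
    using arg_cong[OF v(3), of "\<lambda>x. x $ i"] index_mult_mat_vec_sum[OF M v(1) that] that v(1)
    by (simp add: mult_mat_fun_def)
  define nv where "nv = (\<Sum>i<n. cmod (v $ i)^2)"
  obtain i0 where i0: "i0 < n" "v $ i0 \<noteq> 0"
    using v(1,2) by (metis eq_vecI index_zero_vec(1,2) carrier_vecD)
  have nv0: "nv > 0" unfolding nv_def
    by (rule sum_pos2[of "{..<n}" i0]) (use i0 in auto)
  \<comment> \<open>the phase \<open>ph\<close> makes the first coordinate of the normalised eigenvector nonnegative\<close>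
  define ph where "ph = (if v $ 0 = 0 then 1 else cnj (v $ 0) / of_real (cmod (v $ 0)))"
  have ph1: "cmod ph = 1" unfolding ph_def by (auto simp: norm_divide)
  define c where "c = ph / of_real (sqrt nv)"
  define u where "u i = c * v $ i" for i
  show ?thesis
  proof
    fix i assume i: "i < n"
    have "mult_mat_fun n M u i = c * mult_mat_fun n M (\<lambda>l. v $ l) i"
      unfolding u_def mult_mat_fun_def by (simp add: sum_distrib_left algebra_simps)
    then show "mult_mat_fun n M u i = e * u i"
      using Mv[OF i] unfolding u_def by simp
  next
    have "u 0 = of_real (cmod (v $ 0) / sqrt nv)"
    proof (cases "v $ 0 = 0")
      case False
      then show ?thesis using complex_mult_cnj_self[of "v $ 0"] unfolding u_def c_def ph_def
        by (simp add: power2_eq_square divide_simps)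
    qed (simp add: u_def)
    then show "0 \<le> u 0" using nv0 by (simp only: complex_of_real_nonneg_iff) simp
  next
    have "(\<Sum>i<n. cmod (u i)^2) = (\<Sum>i<n. cmod (v $ i)^2 / nv)"
      unfolding u_def c_def using nv0 ph1 by (simp add: norm_mult norm_divide power_divide)
    also have "\<dots> = 1"
      unfolding sum_divide_distrib[symmetric] nv_def[symmetric] using nv0 by simp
    finally show "(\<Sum>i<n. cmod (u i)^2) = 1" .
  qed
qed

lemma rank_one_update_square_entry:
  fixes x y :: "nat \<Rightarrow> complex"
  assumes "i < n" "j < n"
  shows "(\<Sum>k<n. ((if i = k then 1 else 0) - x i * y k) * ((if k = j then 1 else 0) - x k * y j))
       = (if i = j then 1 else 0) - 2 * x i * y j + x i * y j * (\<Sum>k<n. y k * x k)"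
proof -
  have pt: "((if i = k then 1 else 0) - x i * y k) * ((if k = j then 1 else 0) - x k * y j) =
     (if k = i then (if i = j then 1 else 0) else 0) - (if k = i then x k * y j else 0)
       - (if k = j then x i * y k else 0) + x i * y j * (y k * x k)" for k
    by (auto simp: algebra_simps)
  show ?thesis
    unfolding pt using assms by (simp add: sum.distrib sum_subtractf sum_distrib_left)
qed

lemma householder_involution:
  fixes w :: "nat \<Rightarrow> complex" and d :: real
  assumes ww: "(\<Sum>k<n. cnj (w k) * w k) = of_real (2 * d)" and d: "d \<noteq> 0"
  defines "H \<equiv> mat n n (\<lambda>(i,j). (if i = j then 1 else 0) - w i * (cnj (w j) / of_real d))"
  shows "adj H = H" "H * H = 1\<^sub>m n"
proof -
  have Hc: "H \<in> carrier_mat n n" unfolding H_def by simp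
  show "adj H = H" by (rule eq_matI) (auto simp: H_def mult.commute)
  show "H * H = 1\<^sub>m n"
  proof (rule eq_matI)
    fix i j assume "i < dim_row (1\<^sub>m n :: complex mat)" "j < dim_col (1\<^sub>m n :: complex mat)"
    then have ij: "i < n" "j < n" by auto
    have "(H * H) $$ (i,j) = (\<Sum>k<n. ((if i = k then 1 else 0) - w i * (cnj (w k) / of_real d)) *
            ((if k = j then 1 else 0) - w k * (cnj (w j) / of_real d)))"
      using index_mult_mat_sum[OF Hc Hc ij] ij by (simp add: H_def)
    also have "\<dots> = (if i = j then 1 else 0) - 2 * w i * (cnj (w j) / of_real d) +
         w i * (cnj (w j) / of_real d) * (\<Sum>k<n. (cnj (w k) / of_real d) * w k)"
      by (rule rank_one_update_square_entry[OF ij])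
    also have "(\<Sum>k<n. (cnj (w k) / of_real d) * w k) = 2"
      using ww d by (simp add: sum_divide_distrib[symmetric] divide_simps)
    finally show "(H * H) $$ (i,j) = 1\<^sub>m n $$ (i,j)" using ij by simp
  qed (auto simp: H_def)
qed

lemma norm_sq_first_basis_diff:
  fixes u :: "nat \<Rightarrow> complex"
  assumes n: "0 < n" and ua: "u 0 = of_real a" and nrm: "(\<Sum>i<n. cmod (u i)^2) = 1"
  defines "w \<equiv> \<lambda>i. (if i = 0 then 1 else 0) - u i"
  shows "(\<Sum>k<n. cnj (w k) * w k) = of_real (2 * (1 - a))"
proof -
  have "(\<Sum>k<n. cnj (w k) * w k) =
      (\<Sum>k<n. (if k = 0 then 1 - (cnj (u k) + u k) else 0) + cnj (u k) * u k)"
    unfolding w_def by (intro sum.cong refl) (auto simp: algebra_simps)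
  also have "\<dots> = 1 - (cnj (u 0) + u 0) + (\<Sum>k<n. cnj (u k) * u k)"
    using n by (simp add: sum.distrib)
  also have "(\<Sum>k<n. cnj (u k) * u k) = of_real (\<Sum>k<n. cmod (u k)^2)"
    by (simp only: of_real_sum complex_mult_cnj_self)
  also have "1 - (cnj (u 0) + u 0) + of_real (\<Sum>k<n. cmod (u k)^2) = of_real (2 * (1 - a))"
    using nrm ua by simp
  finally show ?thesis .
qed

lemma exists_householder_first_column:
  fixes u :: "nat \<Rightarrow> complex"
  assumes n: "0 < n" and u0: "0 \<le> u 0" and nrm: "(\<Sum>i<n. cmod (u i)^2) = 1"
  obtains H where "H \<in> carrier_mat n n" "adj H = H" "H * H = 1\<^sub>m n" "\<And>i. i < n \<Longrightarrow> H $$ (i,0) = u i"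
proof -
  define a where "a = Re (u 0)"
  have ua: "u 0 = of_real a" using u0 complex_nonneg_iff unfolding a_def by blast
  have "{..<n} = insert 0 {1..<n}" using n by auto
  then have a2: "a * a + (\<Sum>i\<in>{1..<n}. cmod (u i)^2) = 1"
    using nrm ua by (simp add: power2_eq_square)
  have rest0: "0 \<le> (\<Sum>i\<in>{1..<n}. cmod (u i)^2)" by (auto intro: sum_nonneg)
  show ?thesis
  proof (cases "a = 1")
    case True
    then have "\<forall>i\<in>{1..<n}. cmod (u i)^2 = 0"
      using a2 by (subst sum_nonneg_eq_0_iff[symmetric]) auto
    then have "1\<^sub>m n $$ (i, 0) = u i" if "i < n" for i
      using that ua True by (cases "i = 0") auto
    then show ?thesis using that[of "1\<^sub>m n"] by simp
  next
    case False
    have a1: "a < 1"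
      using False a2 rest0 by (smt (verit) mult_le_cancel_left1)
    \<comment> \<open>the reflection in the hyperplane orthogonal to \<open>e\<^sub>0 - u\<close> exchanges \<open>e\<^sub>0\<close> and \<open>u\<close>\<close>
    define w where "w i = (if i = 0 then 1 else 0) - u i" for i
    define H where "H = mat n n (\<lambda>(i,j). (if i = j then 1 else 0) - w i * (cnj (w j) / of_real (1 - a)))"
    have col: "H $$ (i, 0) = u i" if "i < n" for i
    proof -
      have "cnj (w 0) / of_real (1 - a) = 1" using a1 ua by (simp add: w_def)
      then show ?thesis using that n unfolding H_def by (simp add: w_def)
    qed
    show ?thesis
      using that[of H] householder_involution[OF norm_sq_first_basis_diff[OF n ua nrm]] a1 col
      unfolding H_def w_def by simp
  qed
qed

definition mat_tail :: "nat \<Rightarrow> complex mat \<Rightarrow> complex mat" where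
  "mat_tail m N = mat m m (\<lambda>(i,j). N $$ (Suc i, Suc j))"

definition mat_cons :: "nat \<Rightarrow> complex \<Rightarrow> complex mat \<Rightarrow> complex mat" where
  "mat_cons m c R = mat (Suc m) (Suc m)
     (\<lambda>(i,j). if i = 0 \<and> j = 0 then c else if i = 0 \<or> j = 0 then 0 else R $$ (i - 1, j - 1))"

lemma sesq_form_Suc:
  "sesq_form (Suc m) P w w = cnj (w 0) * P $$ (0,0) * w 0 + (\<Sum>l<m. cnj (w 0) * P $$ (0, Suc l) * w (Suc l))
     + (\<Sum>k<m. cnj (w (Suc k)) * P $$ (Suc k, 0) * w 0) + sesq_form m (mat_tail m P) (\<lambda>k. w (Suc k)) (\<lambda>k. w (Suc k))"
proof -
  have "sesq_form m (mat_tail m P) (\<lambda>k. w (Suc k)) (\<lambda>k. w (Suc k)) =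
     (\<Sum>k<m. \<Sum>l<m. cnj (w (Suc k)) * P $$ (Suc k, Suc l) * w (Suc l))"
    unfolding sesq_form_def mat_tail_def by (intro sum.cong refl) auto
  then show ?thesis
    unfolding sesq_form_def sum.lessThan_Suc_shift by (simp add: sum.distrib del: lessThan_Suc)
qed

lemma psd_mat_tail:
  assumes "psd (Suc m) N" shows "psd m (mat_tail m N)"
  unfolding psd_iff_sesq_form
proof (intro conjI allI)
  show "mat_tail m N \<in> carrier_mat m m" unfolding mat_tail_def by simp
  fix w :: "nat \<Rightarrow> complex"
  define w' where "w' k = (if k = 0 then 0 else w (k - 1))" for k :: nat
  have "sesq_form (Suc m) N w' w' = sesq_form m (mat_tail m N) w w"
    using sesq_form_Suc[of m N w'] unfolding w'_def by simp
  then show "0 \<le> sesq_form m (mat_tail m N) w w"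
    using psd_sesq_form_nonneg[OF assms, of w'] by simp
qed

lemma mat_tail_mat_cons[simp]: "R \<in> carrier_mat m m \<Longrightarrow> mat_tail m (mat_cons m c R) = R"
  unfolding mat_tail_def mat_cons_def by (rule eq_matI) auto

lemma psd_mat_cons:
  assumes c: "0 \<le> c" and R: "psd m R" shows "psd (Suc m) (mat_cons m c R)"
  unfolding psd_iff_sesq_form
proof (intro conjI allI)
  show "mat_cons m c R \<in> carrier_mat (Suc m) (Suc m)" unfolding mat_cons_def by simp
  fix w
  have "sesq_form (Suc m) (mat_cons m c R) w w = cnj (w 0) * c * w 0 + sesq_form m R (\<lambda>k. w (Suc k)) (\<lambda>k. w (Suc k))"
    unfolding sesq_form_Suc mat_tail_mat_cons[OF psd_carrier_mat[OF R]] by (simp add: mat_cons_def)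
  moreover have "cnj (w 0) * c * w 0 = c * of_real (cmod (w 0) ^ 2)"
    by (simp only: complex_mult_cnj_self[symmetric]) (simp add: mult_ac)
  moreover have "0 \<le> c * of_real (cmod (w 0) ^ 2)"
    using c by (intro mult_nonneg_nonneg complex_of_real_nonneg_iff[THEN iffD2]) simp_all
  ultimately show "0 \<le> sesq_form (Suc m) (mat_cons m c R) w w"
    using psd_sesq_form_nonneg[OF R] by (metis add_nonneg_nonneg)
qed

lemma mat_cons_mult:
  assumes R: "R \<in> carrier_mat m m" and S: "S \<in> carrier_mat m m"
  shows "mat_cons m c R * mat_cons m d S = mat_cons m (c * d) (R * S)"
proof (rule eq_matI)
  fix i j assume "i < dim_row (mat_cons m (c * d) (R * S))" "j < dim_col (mat_cons m (c * d) (R * S))"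
  then have ij: "i < Suc m" "j < Suc m" by (simp_all add: mat_cons_def)
  have C: "mat_cons m e T \<in> carrier_mat (Suc m) (Suc m)" for e T by (simp add: mat_cons_def)
  have "(mat_cons m c R * mat_cons m d S) $$ (i,j) =
     mat_cons m c R $$ (i,0) * mat_cons m d S $$ (0,j) + (\<Sum>l<m. mat_cons m c R $$ (i,Suc l) * mat_cons m d S $$ (Suc l,j))"
    by (subst index_mult_mat_sum[OF C[of c R] C[of d S] ij]) (rule sum.lessThan_Suc_shift)
  also have "\<dots> = mat_cons m (c * d) (R * S) $$ (i,j)"
  proof (cases i; cases j)
    fix i' j' assume "i = Suc i'" "j = Suc j'"
    then show ?thesis
      using ij index_mult_mat_sum[OF R S, of i' j'] by (simp add: mat_cons_def)
  qed (use ij in \<open>auto simp: mat_cons_def\<close>)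
  finally show "(mat_cons m c R * mat_cons m d S) $$ (i,j) = mat_cons m (c * d) (R * S) $$ (i,j)" .
qed (simp_all add: mat_cons_def)

lemma mat_cons_mat_tail:
  assumes N: "N \<in> carrier_mat (Suc m) (Suc m)"
    and col: "\<And>i. i < Suc m \<Longrightarrow> N $$ (i,0) = (if i = 0 then c else 0)"
    and row: "\<And>j. j < Suc m \<Longrightarrow> N $$ (0,j) = (if j = 0 then c else 0)"
  shows "mat_cons m c (mat_tail m N) = N"
proof (rule eq_matI)
  fix i j assume "i < dim_row N" "j < dim_col N"
  then show "mat_cons m c (mat_tail m N) $$ (i, j) = N $$ (i, j)"
    using N col[of i] row[of j] by (cases i; cases j) (auto simp: mat_cons_def mat_tail_def)
qed (use N in \<open>auto simp: mat_cons_def\<close>)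

lemma involution_cancel_left:
  fixes H X :: "'a :: semiring_1 mat"
  assumes "H \<in> carrier_mat n n" "H * H = 1\<^sub>m n" "X \<in> carrier_mat n k"
  shows "H * (H * X) = X"
proof -
  have "H * (H * X) = (H * H) * X" using assoc_mult_mat[OF assms(1,1,3)] by simp
  then show ?thesis using assms(2,3) by simp
qed

lemma involution_conj_mult:
  fixes H B C :: "'a :: semiring_1 mat"
  assumes H: "H \<in> carrier_mat n n" "H * H = 1\<^sub>m n" and B: "B \<in> carrier_mat n n" and C: "C \<in> carrier_mat n n"
  shows "(H * B * H) * (H * C * H) = H * (B * C) * H"
proof -
  have "(H * B * H) * (H * C * H) = H * (B * (H * (H * (C * H))))"
    using H B C by (simp add: assoc_mult_mat[of _ n n _ n _ n])
  also have "H * (H * (C * H)) = C * H"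
    using H C by (intro involution_cancel_left[OF H, of _ n]) simp
  finally show ?thesis using H B C by (simp add: assoc_mult_mat[of _ n n _ n _ n])
qed

lemma involution_conj_conj:
  fixes H M :: "'a :: semiring_1 mat"
  assumes H: "H \<in> carrier_mat n n" "H * H = 1\<^sub>m n" and M: "M \<in> carrier_mat n n"
  shows "H * (H * M * H) * H = M"
proof -
  have "H * (H * M * H) * H = H * (H * (M * (H * H)))"
    using H M by (simp add: assoc_mult_mat[of _ n n _ n _ n])
  then show ?thesis using H involution_cancel_left[OF H M] right_mult_one_mat[OF M] by simp
qed

lemma householder_conj_first_column:
  assumes H: "H \<in> carrier_mat n n" "H * H = 1\<^sub>m n" and M: "M \<in> carrier_mat n n"
    and col: "\<And>i. i < n \<Longrightarrow> H $$ (i,0) = u i"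
    and eigen: "\<And>i. i < n \<Longrightarrow> mult_mat_fun n M u i = e * u i"
    and i: "i < n" and n: "0 < n"
  shows "(H * M * H) $$ (i,0) = (if i = 0 then e else 0)"
proof -
  have MH: "(M * H) $$ (k,0) = e * H $$ (k,0)" if "k < n" for k
    using index_mult_mat_sum[OF M H(1) that n] eigen[OF that] col that
    by (simp add: mult_mat_fun_def)
  have "(H * M * H) $$ (i,0) = (\<Sum>k<n. H $$ (i,k) * (e * H $$ (k,0)))"
    using H M index_mult_mat_sum[OF H(1) _ i n, of "M * H"] MH by simp
  also have "\<dots> = e * (H * H) $$ (i,0)"
    using index_mult_mat_sum[OF H(1) H(1) i n] by (simp add: sum_distrib_left algebra_simps)
  finally show ?thesis using H(2) i n by simp
qed

text \<open>Induction on the dimension: a Householder reflection moves a unit eigenvector to the first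
  basis vector, which splits off a \<open>1 \<times> 1\<close> block.\<close>
lemma psd_sqrt_exists:
  "psd n M \<Longrightarrow> \<exists>R. psd n R \<and> R * R = M"
proof (induction n arbitrary: M)
  case 0
  have "psd 0 (0\<^sub>m 0 0)" unfolding psd_iff_sesq_form sesq_form_def by simp
  moreover have "0\<^sub>m 0 0 * 0\<^sub>m 0 0 = M"
    using psd_carrier_mat[OF "0.prems"] by (intro eq_matI) auto
  ultimately show ?case by blast
next
  case (Suc m)
  have M: "M \<in> carrier_mat (Suc m) (Suc m)" using Suc.prems by (rule psd_carrier_mat)
  obtain e u where eigen: "\<And>i. i < Suc m \<Longrightarrow> mult_mat_fun (Suc m) M u i = e * u i"
    and u: "0 \<le> u 0" "(\<Sum>i<Suc m. cmod (u i)^2) = 1"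
    using exists_unit_eigenvector[OF M zero_less_Suc] by metis
  obtain H where H: "H \<in> carrier_mat (Suc m) (Suc m)" "adj H = H" "H * H = 1\<^sub>m (Suc m)"
    and col: "\<And>i. i < Suc m \<Longrightarrow> H $$ (i,0) = u i"
    using exists_householder_first_column[OF zero_less_Suc u] by metis
  define N where "N = H * M * H"
  have N: "psd (Suc m) N" unfolding N_def using psd_hermitian_conj[OF H(1,2) Suc.prems] .
  have Ncol: "N $$ (i,0) = (if i = 0 then e else 0)" if "i < Suc m" for i
    unfolding N_def using householder_conj_first_column[OF H(1,3) M col eigen that] by simp
  then have "0 \<le> e" using psd_diag_nonneg[OF N, of 0 0] by simp
  then obtain r where e: "e = of_real r" "0 \<le> r" using complex_nonneg_iff by blast
  have Nrow: "N $$ (0,j) = (if j = 0 then e else 0)" if "j < Suc m" for j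
    using psd_entry_swap[OF N that, of 0] Ncol[OF that] e(1) by auto
  obtain R' where R': "psd m R'" "R' * R' = mat_tail m N"
    using Suc.IH[OF psd_mat_tail[OF N]] by blast
  define B where "B = mat_cons m (of_real (sqrt r)) R'"
  have B: "psd (Suc m) B" unfolding B_def using e R'(1) by (intro psd_mat_cons) simp_all
  have "B * B = N"
    unfolding B_def mat_cons_mult[OF psd_carrier_mat[OF R'(1)] psd_carrier_mat[OF R'(1)]] R'(2)
    using mat_cons_mat_tail[OF psd_carrier_mat[OF N] Ncol Nrow] e
    by (simp flip: of_real_mult)
  then have "(H * B * H) * (H * B * H) = M"
    using involution_conj_mult[OF H(1,3)] involution_conj_conj[OF H(1,3) M] psd_carrier_mat[OF B]
    unfolding N_def by simp
  then show ?case using psd_hermitian_conj[OF H(1,2) B] by blast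
qed

section \<open>Trace norm and diamond norm\<close>

lemma psd_adj_mult_self:
  assumes A: "A \<in> carrier_mat n m"
  shows "psd m (adj A * A)"
  unfolding psd_iff_sesq_form
proof (intro conjI allI)
  show "adj A * A \<in> carrier_mat m m" using mult_carrier_mat[OF adj_carrier_mat[OF A] A] .
  fix u
  define y where "y i = (\<Sum>l<m. A $$ (i,l) * u l)" for i
  have "sesq_form m (adj A * A) u u = (\<Sum>k<m. \<Sum>l<m. \<Sum>i<n. cnj (u k) * cnj (A $$ (i,k)) * A $$ (i,l) * u l)"
    unfolding sesq_form_def using A
    by (intro sum.cong refl) (simp add: scalar_prod_row_col[OF adj_carrier_mat[OF A] A] sum_distrib_left sum_distrib_right mult.assoc)
  also have "\<dots> = (\<Sum>k<m. \<Sum>i<n. \<Sum>l<m. cnj (u k) * cnj (A $$ (i,k)) * A $$ (i,l) * u l)"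
    by (intro sum.cong refl sum.swap)
  also have "\<dots> = (\<Sum>i<n. \<Sum>k<m. \<Sum>l<m. cnj (u k) * cnj (A $$ (i,k)) * A $$ (i,l) * u l)"
    by (rule sum.swap)
  also have "\<dots> = (\<Sum>i<n. cnj (y i) * y i)"
    unfolding y_def cnj_sum sum_product by (simp add: mult_ac)
  also have "\<dots> = of_real (\<Sum>i<n. cmod (y i)^2)"
    by (simp only: of_real_sum complex_mult_cnj_self)
  finally show "0 \<le> sesq_form m (adj A * A) u u"
    by (simp del: of_real_sum of_real_power add: sum_nonneg)
qed

lemma psd_mtrace_nonneg:
  assumes "psd n R" shows "0 \<le> mtrace R"
  unfolding mtrace_def using psd_carrier_mat[OF assms] psd_diag_nonneg[OF assms]
  by (auto intro: sum_nonneg)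

lemma trace_norm_eq:
  assumes "A \<in> carrier_mat n m" "psd m R" "R * R = adj A * A"
  shows "trace_norm A = Re (mtrace R)"
proof -
  have "(THE P. psd m P \<and> P * P = adj A * A) = R"
  proof (rule the_equality)
    fix P assume "psd m P \<and> P * P = adj A * A"
    then show "P = R" using psd_sqrt_unique[of m P R] assms(2,3) by simp
  qed (use assms(2,3) in simp)
  then show ?thesis unfolding trace_norm_def using assms(1) by simp
qed

lemma obtain_trace_norm_sqrt:
  assumes "A \<in> carrier_mat n m"
  obtains R where "psd m R" "R * R = adj A * A" "trace_norm A = Re (mtrace R)"
proof -
  obtain R where R: "psd m R" "R * R = adj A * A"
    using psd_sqrt_exists[OF psd_adj_mult_self[OF assms]] by blast
  show ?thesis by (rule that[OF R trace_norm_eq[OF assms R]])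
qed

lemma trace_norm_nonneg:
  assumes "A \<in> carrier_mat n m" shows "0 \<le> trace_norm A"
proof -
  obtain R where "psd m R" "trace_norm A = Re (mtrace R)"
    using obtain_trace_norm_sqrt[OF assms] by blast
  then show ?thesis using psd_mtrace_nonneg[of m R] by (simp add: less_eq_complex_def)
qed

definition kron :: "complex mat \<Rightarrow> complex mat \<Rightarrow> complex mat" where
  "kron A B = mat (dim_row A * dim_row B) (dim_col A * dim_col B)
     (\<lambda>(r,s). A $$ (r div dim_row B, s div dim_col B) * B $$ (r mod dim_row B, s mod dim_col B))"

lemma sum_lessThan_mult_div_mod:
  fixes g :: "nat \<Rightarrow> nat \<Rightarrow> 'a :: comm_monoid_add"
  shows "(\<Sum>t<b * d. g (t div d) (t mod d)) = (\<Sum>x<b. \<Sum>y<d. g x y)"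
proof (induction b)
  case (Suc b)
  have "(\<Sum>t\<in>{b*d..<b*d+d}. g (t div d) (t mod d)) = (\<Sum>y\<in>{0..<d}. g ((y + b*d) div d) ((y + b*d) mod d))"
    using sum.shift_bounds_nat_ivl[of "\<lambda>t. g (t div d) (t mod d)" 0 "b*d" d] by (simp add: add.commute)
  also have "\<dots> = (\<Sum>y<d. g b y)"
    by (auto simp: lessThan_atLeast0 intro!: sum.cong)
  finally show ?case
    using Suc sum.atLeastLessThan_concat[of 0 "b*d" "b*d+d" "\<lambda>t. g (t div d) (t mod d)"]
    by (simp add: lessThan_atLeast0 add.commute)
qed simp

lemma kron_carrier_mat[simp]:
  "A \<in> carrier_mat a b \<Longrightarrow> B \<in> carrier_mat c d \<Longrightarrow> kron A B \<in> carrier_mat (a*c) (b*d)"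
  unfolding kron_def by auto

lemma kron_dims[simp]: "dim_row (kron A B) = dim_row A * dim_row B" "dim_col (kron A B) = dim_col A * dim_col B"
  unfolding kron_def by auto

lemma index_kron:
  "r < dim_row A * dim_row B \<Longrightarrow> s < dim_col A * dim_col B \<Longrightarrow>
   kron A B $$ (r,s) = A $$ (r div dim_row B, s div dim_col B) * B $$ (r mod dim_row B, s mod dim_col B)"
  unfolding kron_def by auto

lemma div_less_of_less_mult: "r < a * (b::nat) \<Longrightarrow> r div b < a"
  by (simp add: less_mult_imp_div_less)

lemma mod_less_of_less_mult: "r < a * (b::nat) \<Longrightarrow> r mod b < b"
  by (metis mod_less_divisor mult_zero_right not_gr_zero not_less0)

lemma kron_mult:
  assumes A: "A \<in> carrier_mat a b" and B: "B \<in> carrier_mat c d"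
    and C: "C \<in> carrier_mat b e" and D: "D \<in> carrier_mat d f"
  shows "kron A B * kron C D = kron (A * C) (B * D)"
proof (rule eq_matI)
  fix r s assume "r < dim_row (kron (A * C) (B * D))" "s < dim_col (kron (A * C) (B * D))"
  then have rs: "r < a * c" "s < e * f" using A B C D by auto
  have "(kron A B * kron C D) $$ (r,s) = (\<Sum>t<b*d. kron A B $$ (r,t) * kron C D $$ (t,s))"
    using index_mult_mat_sum[OF kron_carrier_mat[OF A B] kron_carrier_mat[OF C D] rs] .
  also have "\<dots> = (\<Sum>t<b*d. (A $$ (r div c, t div d) * C $$ (t div d, s div f)) *
      (B $$ (r mod c, t mod d) * D $$ (t mod d, s mod f)))"
    by (intro sum.cong refl) (use A B C D rs in \<open>auto simp: index_kron mult_ac\<close>)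
  also have "\<dots> = (\<Sum>x<b. \<Sum>y<d. (A $$ (r div c, x) * C $$ (x, s div f)) * (B $$ (r mod c, y) * D $$ (y, s mod f)))"
    by (rule sum_lessThan_mult_div_mod)
  also have "\<dots> = (A * C) $$ (r div c, s div f) * (B * D) $$ (r mod c, s mod f)"
    using index_mult_mat_sum[OF A C div_less_of_less_mult[OF rs(1)] div_less_of_less_mult[OF rs(2)]]
      index_mult_mat_sum[OF B D mod_less_of_less_mult[OF rs(1)] mod_less_of_less_mult[OF rs(2)]]
    by (simp add: sum_product)
  also have "\<dots> = kron (A * C) (B * D) $$ (r,s)"
    using A B C D rs by (simp add: index_kron)
  finally show "(kron A B * kron C D) $$ (r,s) = kron (A * C) (B * D) $$ (r,s)" .
qed (use A B C D in auto)

lemma adj_kron: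
  assumes A: "A \<in> carrier_mat a b" and B: "B \<in> carrier_mat c d"
  shows "adj (kron A B) = kron (adj A) (adj B)"
proof (rule eq_matI)
  fix r s assume "r < dim_row (kron (adj A) (adj B))" "s < dim_col (kron (adj A) (adj B))"
  then have rs: "r < b * d" "s < a * c" using A B by auto
  then show "adj (kron A B) $$ (r,s) = kron (adj A) (adj B) $$ (r,s)"
    using A B div_less_of_less_mult[OF rs(1)] div_less_of_less_mult[OF rs(2)]
      mod_less_of_less_mult[OF rs(1)] mod_less_of_less_mult[OF rs(2)]
    by (simp add: index_kron)
qed (use A B in auto)

lemma mtrace_kron:
  assumes A: "A \<in> carrier_mat a a" and B: "B \<in> carrier_mat c c"
  shows "mtrace (kron A B) = mtrace A * mtrace B"
proof -
  have "mtrace (kron A B) = (\<Sum>t<a*c. A $$ (t div c, t div c) * B $$ (t mod c, t mod c))"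
    unfolding mtrace_def using A B by (auto simp: index_kron intro!: sum.cong)
  also have "\<dots> = (\<Sum>x<a. \<Sum>y<c. A $$ (x, x) * B $$ (y, y))"
    by (rule sum_lessThan_mult_div_mod)
  also have "\<dots> = mtrace A * mtrace B"
    unfolding mtrace_def using A B by (simp add: sum_product)
  finally show ?thesis .
qed

lemma psd_kron:
  assumes P: "psd a P" and Q: "psd c Q"
  shows "psd (a * c) (kron P Q)"
proof -
  obtain S where S: "psd a S" "S * S = P" using psd_sqrt_exists[OF P] by blast
  obtain T where T: "psd c T" "T * T = Q" using psd_sqrt_exists[OF Q] by blast
  have Sc: "S \<in> carrier_mat a a" and Tc: "T \<in> carrier_mat c c" using S T by (simp_all add: psd_carrier_mat)
  have "kron P Q = adj (kron S T) * kron S T"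
    using kron_mult[OF Sc Tc Sc Tc] adj_kron[OF Sc Tc] psd_adj[OF S(1)] psd_adj[OF T(1)] S T by simp
  then show ?thesis using psd_adj_mult_self[OF kron_carrier_mat[OF Sc Tc]] by simp
qed

lemma trace_norm_kron:
  assumes D: "D \<in> carrier_mat a b" and X: "X \<in> carrier_mat c d"
  shows "trace_norm (kron D X) = trace_norm D * trace_norm X"
proof -
  obtain RD where RD: "psd b RD" "RD * RD = adj D * D" "trace_norm D = Re (mtrace RD)"
    using obtain_trace_norm_sqrt[OF D] by blast
  obtain RX where RX: "psd d RX" "RX * RX = adj X * X" "trace_norm X = Re (mtrace RX)"
    using obtain_trace_norm_sqrt[OF X] by blast
  have RDc: "RD \<in> carrier_mat b b" and RXc: "RX \<in> carrier_mat d d"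
    using RD RX by (simp_all add: psd_carrier_mat)
  have "adj (kron D X) * kron D X = kron (adj D * D) (adj X * X)"
    using adj_kron[OF D X] kron_mult[OF adj_carrier_mat[OF D] adj_carrier_mat[OF X] D X] by simp
  also have "\<dots> = kron RD RX * kron RD RX" using kron_mult[OF RDc RXc RDc RXc] RD RX by simp
  finally have "trace_norm (kron D X) = Re (mtrace RD * mtrace RX)"
    using trace_norm_eq[OF kron_carrier_mat[OF D X] psd_kron[OF RD(1) RX(1)]] mtrace_kron[OF RDc RXc] by simp
  then show ?thesis
    using RD(3) RX(3) psd_mtrace_nonneg[OF RD(1)] psd_mtrace_nonneg[OF RX(1)]
    by (simp add: less_eq_complex_def)
qed

lemma trace_norm_one_mat: "trace_norm (1\<^sub>m 1) = 1"
proof -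
  have "psd 1 (1\<^sub>m 1)" using psd_adj_mult_self[of "1\<^sub>m 1" 1 1] by simp
  then have "trace_norm (1\<^sub>m 1) = Re (mtrace (1\<^sub>m 1))"
    by (intro trace_norm_eq[of _ 1 1]) auto
  then show ?thesis by (simp add: mtrace_def)
qed

lemma psd_entry_norm_sq_le:
  assumes R: "psd n R" and i: "i < n" and j: "j < n"
  shows "cmod (R $$ (i,j))^2 \<le> Re (R $$ (i,i)) * Re (R $$ (j,j))"
proof (cases "i = j")
  case True
  then show ?thesis
    using psd_diag_nonneg[OF R j j] by (simp add: less_eq_complex_def cmod_eq_Re power2_eq_square)
next
  case False
  define p where "p = Re (R $$ (i,i))"
  define q where "q = Re (R $$ (j,j))"
  define z where "z = R $$ (i,j)"
  have Rii: "R $$ (i,i) = of_real p" and Rjj: "R $$ (j,j) = of_real q" and p: "0 \<le> p"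
    using psd_diag_nonneg[OF R i i] psd_diag_nonneg[OF R j j]
    unfolding p_def q_def by (simp_all add: less_eq_complex_def complex_eq_iff)
  have Rji: "R $$ (j,i) = cnj z" unfolding z_def using psd_entry_swap[OF R i j] .
  show ?thesis
  proof (cases "p = 0")
    case True
    let ?e = "\<lambda>k. (if k = i then 1 else 0) + (if k = j then 0 else 0)"
    have "sesq_form n R ?e ?e = 0"
      using sesq_form_two_point[OF i j, of R 1 0] Rii True by simp
    then have "mult_mat_fun n R ?e j = 0"
      using psd_sesq_form_zero_imp_kernel[OF R _ j] by blast
    moreover have "mult_mat_fun n R ?e j = R $$ (j,i)"
      unfolding mult_mat_fun_def using i False by (simp add: if_distrib[of "\<lambda>x. _ * x"] sum.delta cong: if_cong)
    ultimately have "z = 0" using Rji by simp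
    then show ?thesis using True unfolding z_def p_def q_def by simp
  next
    case False
    define v where "v k = (if k = i then - z else 0) + (if k = j then of_real p else 0)" for k
    have "sesq_form n R v v = of_real p * (of_real p * of_real q - cnj z * z)"
      using sesq_form_two_point[OF i j, of R "- z" "of_real p"] Rii Rjj Rji
      unfolding v_def by (simp add: z_def[symmetric] algebra_simps)
    also have "\<dots> = of_real (p * (p * q - cmod z ^ 2))"
      unfolding complex_mult_cnj_self by simp
    finally have "0 \<le> p * (p * q - cmod z ^ 2)"
      using psd_sesq_form_nonneg[OF R, of v] by (simp only: complex_of_real_nonneg_iff)
    then show ?thesis
      using False p unfolding z_def p_def q_def by (simp add: zero_le_mult_iff)
  qed
qed

lemma mtrace_adj_mult_self:
  assumes A: "A \<in> carrier_mat n m"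
  shows "mtrace (adj A * A) = of_real (\<Sum>k<m. \<Sum>l<n. cmod (A $$ (l,k))^2)"
proof -
  have "mtrace (adj A * A) = (\<Sum>k<m. (adj A * A) $$ (k,k))"
    unfolding mtrace_def using A by simp
  also have "\<dots> = (\<Sum>k<m. \<Sum>l<n. complex_of_real (cmod (A $$ (l,k))^2))"
  proof (intro sum.cong refl)
    fix k assume k: "k \<in> {..<m}"
    have "(adj A * A) $$ (k,k) = (\<Sum>l<n. adj A $$ (k,l) * A $$ (l,k))"
      using index_mult_mat_sum[OF adj_carrier_mat[OF A] A, of k k] k by simp
    also have "\<dots> = (\<Sum>l<n. cnj (A $$ (l,k)) * A $$ (l,k))"
      using A k by (intro sum.cong refl) simp_all
    finally show "(adj A * A) $$ (k,k) = (\<Sum>l<n. complex_of_real (cmod (A $$ (l,k))^2))"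
      unfolding complex_mult_cnj_self .
  qed
  also have "\<dots> = of_real (\<Sum>k<m. \<Sum>l<n. cmod (A $$ (l,k))^2)"
    by (simp only: of_real_sum)
  finally show ?thesis .
qed

lemma norm_entry_le_trace_norm:
  assumes A: "A \<in> carrier_mat n m" and i: "i < n" and j: "j < m"
  shows "cmod (A $$ (i,j)) \<le> trace_norm A"
proof -
  obtain R where R: "psd m R" "R * R = adj A * A" "trace_norm A = Re (mtrace R)"
    using obtain_trace_norm_sqrt[OF A] by blast
  have Rc: "R \<in> carrier_mat m m" using R(1) by (rule psd_carrier_mat)
  define p where "p k = Re (R $$ (k,k))" for k
  have "cmod (A $$ (i,j))^2 \<le> (\<Sum>l<n. cmod (A $$ (l,j))^2)"
    using i by (intro member_le_sum) auto
  also have "\<dots> \<le> (\<Sum>k<m. \<Sum>l<n. cmod (A $$ (l,k))^2)"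
    using j by (intro member_le_sum[of _ _ "\<lambda>k. \<Sum>l<n. cmod (A $$ (l,k))^2"]) (auto intro: sum_nonneg)
  also have "\<dots> = (\<Sum>k<m. \<Sum>l<m. cmod (R $$ (l,k))^2)"
  proof -
    have "mtrace (adj A * A) = mtrace (adj R * R)" using R(2) psd_adj[OF R(1)] by simp
    then show ?thesis unfolding mtrace_adj_mult_self[OF A] mtrace_adj_mult_self[OF Rc] of_real_eq_iff .
  qed
  also have "\<dots> \<le> (\<Sum>k<m. \<Sum>l<m. p l * p k)"
    unfolding p_def using psd_entry_norm_sq_le[OF R(1)] by (intro sum_mono) auto
  also have "\<dots> = (trace_norm A)^2"
    unfolding R(3) mtrace_def p_def using Rc by (simp add: power2_eq_square sum_product mult.commute)
  finally show ?thesis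
    using trace_norm_nonneg[OF A] by (rule power2_le_imp_le)
qed

lemma ext_scalar_input_map:
  assumes D: "D \<in> carrier_mat d d" and \<Theta>: "\<And>Y. Y \<in> carrier_mat 1 1 \<Longrightarrow> \<Theta> Y = Y $$ (0,0) \<cdot>\<^sub>m D"
    and X: "X \<in> carrier_mat k k"
  shows "ext 1 d k \<Theta> X = kron D X"
proof (rule eq_matI)
  fix r s assume "r < dim_row (kron D X)" "s < dim_col (kron D X)"
  then have rs: "r < d * k" "s < d * k" using D X by auto
  have b: "block 1 k (r mod k) (s mod k) X \<in> carrier_mat 1 1" unfolding block_def by simp
  have b0: "block 1 k (r mod k) (s mod k) X $$ (0,0) = X $$ (r mod k, s mod k)" unfolding block_def by simp
  show "ext 1 d k \<Theta> X $$ (r, s) = kron D X $$ (r, s)"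
    unfolding ext_def using rs \<Theta>[OF b] b0 D X div_less_of_less_mult[OF rs(1)] div_less_of_less_mult[OF rs(2)]
    by (simp add: index_kron mult.commute)
qed (use D X in \<open>auto simp: ext_def\<close>)

lemma diamond_norm_scalar_input_map:
  assumes D: "D \<in> carrier_mat d d" and \<Theta>: "\<And>Y. Y \<in> carrier_mat 1 1 \<Longrightarrow> \<Theta> Y = Y $$ (0,0) \<cdot>\<^sub>m D"
  shows "diamond_norm 1 d \<Theta> = trace_norm D"
  unfolding diamond_norm_def
proof (rule cSup_eq_maximum)
  have "trace_norm (ext 1 d 1 \<Theta> (1\<^sub>m 1)) = trace_norm D"
    using ext_scalar_input_map[OF D \<Theta>, of "1\<^sub>m 1" 1] trace_norm_kron[OF D, of "1\<^sub>m 1" 1 1] trace_norm_one_mat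
    by simp
  then show "trace_norm D \<in> {trace_norm (ext 1 d k \<Theta> X) | k X.
            k \<ge> 1 \<and> X \<in> carrier_mat (1*k) (1*k) \<and> trace_norm X \<le> 1}"
    using trace_norm_one_mat by (intro CollectI exI[of _ 1] exI[of _ "1\<^sub>m 1"]) (simp del: One_nat_def)
next
  fix y assume "y \<in> {trace_norm (ext 1 d k \<Theta> X) | k X.
            k \<ge> 1 \<and> X \<in> carrier_mat (1*k) (1*k) \<and> trace_norm X \<le> 1}"
  then obtain k X where y: "y = trace_norm (ext 1 d k \<Theta> X)" and X: "X \<in> carrier_mat k k" "trace_norm X \<le> 1"
    by auto
  have "y = trace_norm D * trace_norm X"
    using y ext_scalar_input_map[OF D \<Theta> X(1)] trace_norm_kron[OF D X(1)] by simp
  also have "\<dots> \<le> trace_norm D"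
    using X trace_norm_nonneg[OF D] by (simp add: mult_left_le)
  finally show "y \<le> trace_norm D" .
qed

section \<open>Circuits and state-preparation channels\<close>

lemma kraus_carrier_mat: "K \<in> set (kraus w g) \<Longrightarrow> K \<in> carrier_mat (2 ^ iwidth w g) (2 ^ w)"
  by (cases g) (auto simp: gate1_def cnot_mat_def anc_mat_def trace_kraus_def meas_kraus_def)

lemma kraus_apply_carrier_smult:
  assumes "\<forall>K \<in> set Ks. K \<in> carrier_mat d m" "\<rho> \<in> carrier_mat m m"
  shows "kraus_apply d Ks \<rho> \<in> carrier_mat d d \<and> kraus_apply d Ks (c \<cdot>\<^sub>m \<rho>) = c \<cdot>\<^sub>m kraus_apply d Ks \<rho>"
  using assms(1)
proof (induction Ks)
  case Nil
  then show ?case unfolding kraus_apply_def by (auto intro!: eq_matI)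
next
  case (Cons K Ks)
  have K: "K \<in> carrier_mat d m" using Cons.prems by auto
  have IH: "kraus_apply d Ks \<rho> \<in> carrier_mat d d" "kraus_apply d Ks (c \<cdot>\<^sub>m \<rho>) = c \<cdot>\<^sub>m kraus_apply d Ks \<rho>"
    using Cons by auto
  have KrK: "K * \<rho> * adj K \<in> carrier_mat d d" using K assms(2) by auto
  have "K * (c \<cdot>\<^sub>m \<rho>) = c \<cdot>\<^sub>m (K * \<rho>)" using K assms(2) by (rule mult_smult_distrib)
  moreover have "(c \<cdot>\<^sub>m (K * \<rho>)) * adj K = c \<cdot>\<^sub>m (K * \<rho> * adj K)"
    by (rule mult_smult_assoc_mat[of _ d m]) (use K assms(2) in auto)
  ultimately show ?case
    using KrK IH add_smult_distrib_left_mat[OF KrK IH(1), of c] by (simp add: kraus_apply_def)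
qed

lemma capply_carrier_smult:
  assumes "\<rho> \<in> carrier_mat (2^w) (2^w)"
  shows "capply w gs \<rho> \<in> carrier_mat (2 ^ cwidth w gs) (2 ^ cwidth w gs) \<and>
         capply w gs (c \<cdot>\<^sub>m \<rho>) = c \<cdot>\<^sub>m capply w gs \<rho>"
  using assms
proof (induction gs arbitrary: w \<rho>)
  case (Cons g gs)
  have "apply_instr w g \<rho> \<in> carrier_mat (2 ^ iwidth w g) (2 ^ iwidth w g)"
     "apply_instr w g (c \<cdot>\<^sub>m \<rho>) = c \<cdot>\<^sub>m apply_instr w g \<rho>"
    unfolding apply_instr_def using kraus_apply_carrier_smult[OF _ Cons.prems] kraus_carrier_mat by blast+
  then show ?case using Cons.IH by simp
qed simp

lemma scalar_mat_one_dim: "(Y :: complex mat) \<in> carrier_mat 1 1 \<Longrightarrow> Y = Y $$ (0,0) \<cdot>\<^sub>m 1\<^sub>m 1"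
  by (rule eq_matI) auto

lemma capply_scalar_input:
  assumes "Y \<in> carrier_mat 1 1"
  shows "capply 0 gs Y = Y $$ (0,0) \<cdot>\<^sub>m capply 0 gs (1\<^sub>m 1)"
  using capply_carrier_smult[of "1\<^sub>m 1" 0 gs "Y $$ (0,0)"] scalar_mat_one_dim[OF assms] by simp

lemma outer_product_scalar_input:
  assumes \<psi>: "\<psi> \<in> carrier_mat d 1" and Y: "Y \<in> carrier_mat 1 1"
  shows "\<psi> * Y * adj \<psi> = Y $$ (0,0) \<cdot>\<^sub>m (\<psi> * adj \<psi>)"
proof (rule eq_matI)
  fix i j assume "i < dim_row (Y $$ (0,0) \<cdot>\<^sub>m (\<psi> * adj \<psi>))" "j < dim_col (Y $$ (0,0) \<cdot>\<^sub>m (\<psi> * adj \<psi>))"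
  then have ij: "i < d" "j < d" using \<psi> by auto
  have "(\<psi> * Y) $$ (i,0) = \<psi> $$ (i,0) * Y $$ (0,0)" using index_mult_mat_sum[OF \<psi> Y ij(1), of 0] by simp
  moreover have "(\<psi> * Y * adj \<psi>) $$ (i,j) = (\<psi> * Y) $$ (i,0) * adj \<psi> $$ (0,j)"
    using index_mult_mat_sum[of "\<psi> * Y" d 1 "adj \<psi>" d i j] \<psi> Y ij by simp
  moreover have "(\<psi> * adj \<psi>) $$ (i,j) = \<psi> $$ (i,0) * adj \<psi> $$ (0,j)"
    using index_mult_mat_sum[OF \<psi> adj_carrier_mat[OF \<psi>] ij] by simp
  ultimately show "(\<psi> * Y * adj \<psi>) $$ (i,j) = (Y $$ (0,0) \<cdot>\<^sub>m (\<psi> * adj \<psi>)) $$ (i,j)"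
    using ij \<psi> by simp
qed (use \<psi> Y in auto)

lemma mtrace_outer_product:
  assumes \<psi>: "\<psi> \<in> carrier_mat d 1"
  shows "mtrace (\<psi> * adj \<psi>) = (adj \<psi> * \<psi>) $$ (0,0)"
proof -
  have "mtrace (\<psi> * adj \<psi>) = (\<Sum>i<d. (\<psi> * adj \<psi>) $$ (i,i))"
    unfolding mtrace_def using \<psi> by simp
  also have "\<dots> = (\<Sum>i<d. \<psi> $$ (i,0) * cnj (\<psi> $$ (i,0)))"
  proof (intro sum.cong refl)
    fix i assume "i \<in> {..<d}"
    then show "(\<psi> * adj \<psi>) $$ (i,i) = \<psi> $$ (i,0) * cnj (\<psi> $$ (i,0))"
      using index_mult_mat_sum[OF \<psi> adj_carrier_mat[OF \<psi>], of i i] \<psi> by simp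
  qed
  also have "\<dots> = (adj \<psi> * \<psi>) $$ (0,0)"
    using index_mult_mat_sum[OF adj_carrier_mat[OF \<psi>] \<psi>, of 0 0] \<psi> by (simp add: mult.commute)
  finally show ?thesis .
qed

lemma channel_completion_state_prep:
  assumes \<psi>: "\<psi> \<in> carrier_mat d 1" and unit: "adj \<psi> * \<psi> = 1\<^sub>m 1"
  shows "channel_completion 1 d \<psi> (\<lambda>\<rho>. \<psi> * \<rho> * adj \<psi>)"
proof -
  note outer = outer_product_scalar_input[OF \<psi>]
  have \<psi>\<psi>: "\<psi> * adj \<psi> \<in> carrier_mat d d" using \<psi> by simp
  have "is_channel 1 d (\<lambda>\<rho>. \<psi> * \<rho> * adj \<psi>)"
    unfolding is_channel_def
  proof (intro conjI ballI allI impI)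
    fix A :: "complex mat" assume A: "A \<in> carrier_mat 1 1"
    show "\<psi> * A * adj \<psi> \<in> carrier_mat d d"
      using mult_carrier_mat[OF mult_carrier_mat[OF \<psi> A] adj_carrier_mat[OF \<psi>]] .
    show "mtrace (\<psi> * A * adj \<psi>) = mtrace A"
      using mtrace_outer_product[OF \<psi>] unit A
      by (simp add: outer[OF A] mtrace_def sum_distrib_left[symmetric])
    fix c
    show "\<psi> * (c \<cdot>\<^sub>m A) * adj \<psi> = c \<cdot>\<^sub>m (\<psi> * A * adj \<psi>)"
      using A \<psi>\<psi> by (simp add: outer) (rule eq_matI; simp)
  next
    fix A B :: "complex mat" assume A: "A \<in> carrier_mat 1 1" and B: "B \<in> carrier_mat 1 1"
    show "\<psi> * (A + B) * adj \<psi> = \<psi> * A * adj \<psi> + \<psi> * B * adj \<psi>"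
      using A B \<psi>\<psi> by (simp add: outer) (rule eq_matI; simp add: distrib_right)
  next
    fix k :: nat and \<rho> assume "psd (1 * k) \<rho>"
    then have \<rho>: "psd k \<rho>" by simp
    have "ext 1 d k (\<lambda>\<rho>. \<psi> * \<rho> * adj \<psi>) \<rho> = kron (\<psi> * adj \<psi>) \<rho>"
      using ext_scalar_input_map[OF \<psi>\<psi> outer psd_carrier_mat[OF \<rho>]] .
    moreover have "psd d (\<psi> * adj \<psi>)"
      using psd_adj_mult_self[OF adj_carrier_mat[OF \<psi>]] by simp
    ultimately show "psd (d * k) (ext 1 d k (\<lambda>\<rho>. \<psi> * \<rho> * adj \<psi>) \<rho>)"
      using psd_kron[OF _ \<rho>] by simp
  qed
  then show ?thesis unfolding channel_completion_def
    using \<psi> unit by (intro conjI exI[of _ \<psi>] exI[of _ "1\<^sub>m 1"]) (auto simp: isometry_def projector_def)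
qed

text \<open>A channel completion of a unit vector (a partial isometry from a one-dimensional space)
  is unique: the projector in its decomposition cannot vanish.\<close>
lemma channel_completion_state_prep_unique:
  assumes \<psi>: "\<psi> \<in> carrier_mat d 1" and unit: "adj \<psi> * \<psi> = 1\<^sub>m 1"
    and \<Phi>: "channel_completion 1 d \<psi> \<Phi>" and \<rho>: "\<rho> \<in> carrier_mat 1 1"
  shows "\<Phi> \<rho> = \<psi> * \<rho> * adj \<psi>"
proof -
  obtain V P where V: "isometry d 1 V" and P: "projector 1 P" and \<psi>VP: "\<psi> = V * P"
    and on_range: "\<forall>\<rho> \<in> carrier_mat 1 1. \<Phi> (P * \<rho> * P) = \<psi> * P * \<rho> * P * adj \<psi>"
    using \<Phi> unfolding channel_completion_def by auto
  have Pc: "P \<in> carrier_mat 1 1" "P * P = P" using P projector_def by auto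
  have "P $$ (0,0) * P $$ (0,0) = P $$ (0,0)"
    using arg_cong[OF Pc(2), of "\<lambda>X. X $$ (0,0)"] index_mult_mat_sum[OF Pc(1) Pc(1), of 0 0] by simp
  then have "P $$ (0,0) = 0 \<or> P $$ (0,0) = 1" by (metis mult_cancel_right1 mult_eq_0_iff)
  moreover have "P $$ (0,0) \<noteq> 0"
  proof
    assume "P $$ (0,0) = 0"
    then have "P = 0\<^sub>m 1 1" using Pc(1) by (intro eq_matI) auto
    then have "\<psi> = 0\<^sub>m d 1" using \<psi>VP V right_mult_zero_mat[of V d 1 1] by (simp add: isometry_def)
    then have "(adj \<psi> * \<psi>) $$ (0,0) = 0" by (simp add: adj_def)
    then show False using unit by simp
  qed
  ultimately have "P = 1\<^sub>m 1" using Pc(1) by (auto intro!: eq_matI)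
  then show ?thesis using on_range \<rho> \<psi> by simp
qed

lemma diamond_norm_state_prep_error:
  assumes \<psi>: "\<psi> \<in> carrier_mat (2^m) 1" and unit: "adj \<psi> * \<psi> = 1\<^sub>m 1"
    and width: "cwidth 0 gs = m" and \<Phi>: "channel_completion 1 (2^m) \<psi> \<Phi>"
  shows "diamond_norm 1 (2^m) (\<lambda>\<rho>. capply 0 gs \<rho> - \<Phi> \<rho>) = trace_norm (capply 0 gs (1\<^sub>m 1) - \<psi> * adj \<psi>)"
proof (rule diamond_norm_scalar_input_map)
  have R: "capply 0 gs (1\<^sub>m 1) \<in> carrier_mat (2^m) (2^m)"
    using capply_carrier_smult[of "1\<^sub>m 1" 0 gs] width by simp
  show "capply 0 gs (1\<^sub>m 1) - \<psi> * adj \<psi> \<in> carrier_mat (2^m) (2^m)"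
    using minus_carrier_mat[OF mult_carrier_mat[OF \<psi> adj_carrier_mat[OF \<psi>]]] .
  fix Y :: "complex mat" assume Y: "Y \<in> carrier_mat 1 1"
  have "capply 0 gs Y - \<Phi> Y = Y $$ (0,0) \<cdot>\<^sub>m capply 0 gs (1\<^sub>m 1) - Y $$ (0,0) \<cdot>\<^sub>m (\<psi> * adj \<psi>)"
    using capply_scalar_input[OF Y] channel_completion_state_prep_unique[OF \<psi> unit \<Phi> Y]
      outer_product_scalar_input[OF \<psi> Y] by simp
  also have "\<dots> = Y $$ (0,0) \<cdot>\<^sub>m (capply 0 gs (1\<^sub>m 1) - \<psi> * adj \<psi>)"
    using R \<psi> by (intro eq_matI) (auto simp: algebra_simps)
  finally show "capply 0 gs Y - \<Phi> Y = Y $$ (0,0) \<cdot>\<^sub>m (capply 0 gs (1\<^sub>m 1) - \<psi> * adj \<psi>)" .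
qed

definition qubit :: "real \<Rightarrow> real \<Rightarrow> complex mat" where
  "qubit c s = mat 2 1 (\<lambda>(i,_). if i = 0 then of_real c else of_real s)"

lemma qubit_carrier_mat: "qubit c s \<in> carrier_mat 2 1"
  unfolding qubit_def by simp

lemma qubit_dims[simp]: "dim_row (qubit c s) = 2" "dim_col (qubit c s) = 1"
  unfolding qubit_def by simp_all

lemma qubit_unit:
  assumes "c^2 + s^2 = 1" shows "adj (qubit c s) * qubit c s = 1\<^sub>m 1"
proof (rule eq_matI)
  fix i j assume "i < dim_row (1\<^sub>m 1 :: complex mat)" "j < dim_col (1\<^sub>m 1 :: complex mat)"
  then have "i = 0" "j = 0" by auto
  moreover have "(adj (qubit c s) * qubit c s) $$ (0,0) = of_real (c^2 + s^2)"
    using index_mult_mat_sum[OF adj_carrier_mat[OF qubit_carrier_mat] qubit_carrier_mat, of 0 0 c s c s]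
    by (simp add: sum_lessThan_2 qubit_def power2_eq_square)
  ultimately show "(adj (qubit c s) * qubit c s) $$ (i,j) = 1\<^sub>m 1 $$ (i,j)" using assms by simp
qed (auto simp: qubit_def)

lemma index_qubit_outer:
  assumes "i < 2" "j < 2"
  shows "(qubit c s * adj (qubit c s)) $$ (i,j) =
    of_real ((if i = 0 then c else s) * (if j = 0 then c else s))"
  using index_mult_mat_sum[OF qubit_carrier_mat adj_carrier_mat[OF qubit_carrier_mat] assms, of c s c s] assms
  by (simp add: qubit_def)

lemma trace_norm_scalar_multiple_of_unitary:
  assumes D: "D \<in> carrier_mat n n" and t: "0 \<le> t" and DD: "adj D * D = of_real (t * t) \<cdot>\<^sub>m 1\<^sub>m n"
  shows "trace_norm D = n * t"
proof -
  define R where "R = (of_real t :: complex) \<cdot>\<^sub>m 1\<^sub>m n"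
  have "psd n R"
  proof -
    define S where "S = (of_real (sqrt t) :: complex) \<cdot>\<^sub>m 1\<^sub>m n"
    have "R = adj S * S" unfolding R_def S_def using t by (intro eq_matI) (auto simp flip: of_real_mult)
    then show ?thesis using psd_adj_mult_self[of S n n] unfolding S_def by simp
  qed
  moreover have "R * R = adj D * D"
    unfolding DD R_def by (intro eq_matI) auto
  ultimately have "trace_norm D = Re (mtrace R)" by (rule trace_norm_eq[OF D])
  then show ?thesis unfolding R_def mtrace_def by simp
qed

lemma trace_norm_qubit_outer_diff:
  assumes cs: "c^2 + s^2 = 1" and s: "0 \<le> s"
  shows "trace_norm (qubit 1 0 * adj (qubit 1 0) - qubit c s * adj (qubit c s)) = 2 * s"
proof -
  define D where "D = qubit 1 0 * adj (qubit 1 0) - qubit c s * adj (qubit c s)"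
  have Dc: "D \<in> carrier_mat 2 2"
    unfolding D_def using minus_carrier_mat[OF mult_carrier_mat[OF qubit_carrier_mat adj_carrier_mat[OF qubit_carrier_mat]]] .
  have D: "D $$ (i,j) = of_real (if i = 0 \<and> j = 0 then s^2 else if i = 1 \<and> j = 1 then - (s^2) else - (c * s))"
    if "i < 2" "j < 2" for i j
  proof -
    have "D $$ (i,j) = of_real ((if i = 0 then 1 else 0) * (if j = 0 then 1 else 0)
        - (if i = 0 then c else s) * (if j = 0 then c else s))"
      unfolding D_def using that by (simp add: index_qubit_outer[OF that] del: of_real_mult)
    moreover have "i = 0 \<or> i = 1" "j = 0 \<or> j = 1" using that by auto
    then have "(if i = 0 then 1 else 0) * (if j = 0 then 1 else 0) - (if i = 0 then c else s) * (if j = 0 then c else s)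
        = (if i = 0 \<and> j = 0 then s^2 else if i = 1 \<and> j = 1 then - (s^2) else - (c * s))"
      using cs by (auto simp: power2_eq_square algebra_simps)
    ultimately show ?thesis by simp
  qed
  have "adj D * D = of_real (s * s) \<cdot>\<^sub>m 1\<^sub>m 2"
  proof (rule eq_matI)
    fix i j assume "i < dim_row (of_real (s * s) \<cdot>\<^sub>m 1\<^sub>m 2 :: complex mat)" "j < dim_col (of_real (s * s) \<cdot>\<^sub>m 1\<^sub>m 2 :: complex mat)"
    then have ij: "i < 2" "j < 2" by auto
    have "s^2 * s^2 + (c * s) * (c * s) = s * s * (c^2 + s^2)"
      by (simp add: power2_eq_square algebra_simps)
    then have "s^2 * s^2 + (c * s) * (c * s) = s * s"
      using cs by simp
    then have "(adj D * D) $$ (i,j) = of_real (if i = j then s * s else 0)"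
      using ij index_mult_mat_sum[OF adj_carrier_mat[OF Dc] Dc ij] Dc D
      by (auto simp: sum_lessThan_2 less_2_cases_iff algebra_simps simp flip: of_real_mult of_real_add)
    then show "(adj D * D) $$ (i,j) = (of_real (s * s) \<cdot>\<^sub>m 1\<^sub>m 2) $$ (i,j)" using ij by simp
  qed (use Dc in auto)
  then show ?thesis using trace_norm_scalar_multiple_of_unitary[OF Dc s] unfolding D_def by simp
qed

section \<open>A constant-output Turing machine\<close>

definition anc_code :: "bool list" where "anc_code = enc_circ (0, [Anc])"

lemma anc_code_eq: "anc_code = [False, False, True, True, True, True, True, True, False, False]"
  unfolding anc_code_def enc_circ_def by (simp add: numeral_eq_Suc enc_nat_def)

definition anc_code_symbol :: "nat \<Rightarrow> nat" where "anc_code_symbol i = (if anc_code ! i then 2 else 1)"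

text \<open>The machine walks to the right writing the ten bits of \<open>anc_code\<close> (states \<open>0, 2, \<dots>, 10\<close>),
  then a non-bit marker (state \<open>11\<close>), and halts after eleven steps on every input.\<close>
definition anc_writer_delta :: "nat \<Rightarrow> nat \<Rightarrow> nat \<times> nat \<times> dir" where
  "anc_writer_delta q a = (if q = 0 then (2, anc_code_symbol 0, Rgt) else if 2 \<le> q \<and> q \<le> 10 then (q + 1, anc_code_symbol (q - 1), Rgt)
     else if q = 11 then (1, 3, Stay) else (1, 0, Stay))"

definition anc_writer :: tm where "anc_writer = (12, 4, anc_writer_delta)"

lemma anc_code_symbol_less: "anc_code_symbol i < 4" unfolding anc_code_symbol_def by auto

lemma wf_anc_writer: "wf_tm anc_writer"
  unfolding wf_tm_def anc_writer_def anc_writer_delta_def using anc_code_symbol_less by auto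

lemma anc_writer_run:
  assumes "t \<le> 10"
  shows "(tm_step anc_writer ^^ t) (tm_init x) = (if t = 0 then 0 else t + 1, t,
     \<lambda>j. if j < t then anc_code_symbol j else snd (snd (tm_init x)) j)"
  using assms
proof (induction t)
  case 0 then show ?case by (auto simp: tm_init_def)
next
  case (Suc t)
  then have IH: "(tm_step anc_writer ^^ t) (tm_init x) = (if t = 0 then 0 else t + 1, t,
     \<lambda>j. if j < t then anc_code_symbol j else snd (snd (tm_init x)) j)" by simp
  have "(tm_step anc_writer ^^ Suc t) (tm_init x) = tm_step anc_writer ((tm_step anc_writer ^^ t) (tm_init x))" by simp
  also have "\<dots> = (Suc t + 1, Suc t, \<lambda>j. if j < Suc t then anc_code_symbol j else snd (snd (tm_init x)) j)"
    unfolding IH using Suc.prems by (simp add: tm_step_def anc_writer_def anc_writer_delta_def) (auto intro!: ext)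
  finally show ?case by simp
qed

lemma anc_writer_halt:
  "(tm_step anc_writer ^^ 11) (tm_init x) = (1, 10, \<lambda>j. if j < 10 then anc_code_symbol j else if j = 10 then 3 else snd (snd (tm_init x)) j)"
proof -
  have "(tm_step anc_writer ^^ 11) (tm_init x) = tm_step anc_writer ((tm_step anc_writer ^^ 10) (tm_init x))"
    by (simp add: numeral_eq_Suc)
  also have "\<dots> = (1, 10, \<lambda>j. if j < 10 then anc_code_symbol j else if j = 10 then 3 else snd (snd (tm_init x)) j)"
    unfolding anc_writer_run[of 10 x, simplified] by (simp add: tm_step_def anc_writer_def anc_writer_delta_def) (auto intro!: ext)
  finally show ?thesis .
qed

lemma anc_writer_output:
  "tm_output (\<lambda>j. if j < 10 then anc_code_symbol j else if j = 10 then 3 else snd (snd (tm_init x)) j) = anc_code"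
proof -
  let ?tp = "\<lambda>j. if j < 10 then anc_code_symbol j else if j = 10 then (3::nat) else snd (snd (tm_init x)) j"
  have "(LEAST j. ?tp j \<noteq> 1 \<and> ?tp j \<noteq> 2) = 10"
  proof (rule Least_equality)
    show "?tp 10 \<noteq> 1 \<and> ?tp 10 \<noteq> 2" by simp
    fix y assume y: "?tp y \<noteq> 1 \<and> ?tp y \<noteq> 2"
    show "10 \<le> y"
    proof (rule ccontr)
      assume "\<not> 10 \<le> y" then have "y < 10" by simp
      then show False using y by (simp add: anc_code_symbol_def split: if_splits)
    qed
  qed
  then show ?thesis unfolding tm_output_def
    by (simp add: upt_rec anc_code_symbol_def anc_code_eq numeral_eq_Suc)
qed

lemma poly_time_computable_anc_code: "poly_time_computable (\<lambda>_. anc_code)"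
  unfolding poly_time_computable_def
proof (intro exI conjI)
  show "wf_tm anc_writer" by (rule wf_anc_writer)
  show "computes_in_time anc_writer (\<lambda>_. anc_code) (\<lambda>n. 11 * n ^ 0 + 11)"
    unfolding computes_in_time_def
    using anc_writer_halt anc_writer_output by (intro allI exI[of _ 11]) simp
qed

section \<open>Injectivity of the circuit encoding\<close>

lemma enc_nat_0: "enc_nat 0 = [False, False]" unfolding enc_nat_def by simp
lemma enc_nat_Suc: "enc_nat (Suc a) = True # True # enc_nat a" unfolding enc_nat_def by simp

lemma enc_nat_append_inj: "enc_nat a @ r = enc_nat b @ r' \<Longrightarrow> a = b \<and> r = r'"
proof (induction a arbitrary: b)
  case 0 then show ?case by (cases b) (auto simp: enc_nat_0 enc_nat_Suc)
next
  case (Suc a) then show ?case by (cases b) (auto simp: enc_nat_0 enc_nat_Suc)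
qed

fun instr_tag :: "instr \<Rightarrow> nat" where
  "instr_tag (Hg i) = 0" | "instr_tag (Tg i) = 1" | "instr_tag (CNOTg c t) = 2" | "instr_tag Anc = 3" | "instr_tag (TraceOut i) = 4" | "instr_tag (Meas i) = 5"

fun instr_args :: "instr \<Rightarrow> bool list" where
  "instr_args (Hg i) = enc_nat i" | "instr_args (Tg i) = enc_nat i" | "instr_args (CNOTg c t) = enc_nat c @ enc_nat t"
| "instr_args Anc = []" | "instr_args (TraceOut i) = enc_nat i" | "instr_args (Meas i) = enc_nat i"

lemma enc_instr_eq_tag_args: "enc_instr g = enc_nat (instr_tag g) @ instr_args g"
  by (cases g) auto

lemma enc_instr_append_inj:
  assumes "enc_instr g @ r = enc_instr h @ r'"
  shows "g = h \<and> r = r'"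
proof -
  have "enc_nat (instr_tag g) @ (instr_args g @ r) = enc_nat (instr_tag h) @ (instr_args h @ r')"
    using assms unfolding enc_instr_eq_tag_args by simp
  then have t: "instr_tag g = instr_tag h" and a: "instr_args g @ r = instr_args h @ r'" using enc_nat_append_inj by blast+
  show ?thesis
  proof (cases g)
    case (CNOTg c t)
    then obtain c' t' where h: "h = CNOTg c' t'" using t by (cases h) auto
    have "enc_nat c @ (enc_nat t @ r) = enc_nat c' @ (enc_nat t' @ r')" using a CNOTg h by simp
    then have "c = c'" "enc_nat t @ r = enc_nat t' @ r'" using enc_nat_append_inj by blast+
    then show ?thesis using enc_nat_append_inj CNOTg h by blast
  qed (use t a in \<open>(cases h; auto dest: enc_nat_append_inj)+\<close>)
qed

lemma enc_instr_nonempty: "enc_instr g \<noteq> []"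
  by (cases g) (auto simp: enc_nat_def)

lemma concat_map_enc_instr_inj: "concat (map enc_instr gs) = concat (map enc_instr hs) \<Longrightarrow> gs = hs"
proof (induction gs arbitrary: hs)
  case Nil then show ?case by (cases hs) (auto simp: enc_instr_nonempty)
next
  case (Cons g gs)
  then show ?case
  proof (cases hs)
    case Nil then show ?thesis using Cons.prems enc_instr_nonempty by auto
  next
    case (Cons h hs')
    then have "enc_instr g @ concat (map enc_instr gs) = enc_instr h @ concat (map enc_instr hs')"
      using Cons.prems \<open>hs = h # hs'\<close> by simp
    then show ?thesis using enc_instr_append_inj Cons.IH Cons by blast
  qed
qed

lemma inj_enc_circ: "inj enc_circ"
proof (rule injI)
  fix a b assume "enc_circ a = enc_circ b"
  then have "enc_nat (fst a) @ concat (map enc_instr (snd a)) = enc_nat (fst b) @ concat (map enc_instr (snd b))"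
    unfolding enc_circ_def .
  then show "a = b" using enc_nat_append_inj concat_map_enc_instr_inj by (metis prod.expand)
qed

section \<open>Countability of the polynomial-time computable functions\<close>

instance dir :: countable by countable_datatype

text \<open>A run of a well-formed machine only consults its transition function on valid states and
  symbols, so the machine is determined by its finite table, an element of a countable type.\<close>
definition tm_table :: "tm \<Rightarrow> nat \<times> nat \<times> (nat \<times> nat \<times> dir) list list" where
  "tm_table M = (case M of (Q, G, \<delta>) \<Rightarrow> (Q, G, map (\<lambda>q. map (\<delta> q) [0..<G]) [0..<Q]))"

definition tm_inv :: "tm \<Rightarrow> config \<Rightarrow> bool" where
  "tm_inv M c = (case M of (Q, G, \<delta>) \<Rightarrow> fst c < Q \<and> (\<forall>i. snd (snd c) i < G))"

lemma tm_inv_init: "wf_tm M \<Longrightarrow> tm_inv M (tm_init x)"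
  unfolding wf_tm_def tm_inv_def tm_init_def by (cases M) auto

lemma tm_inv_step:
  assumes wf: "wf_tm M" and inv: "tm_inv M c" shows "tm_inv M (tm_step M c)"
proof -
  obtain Q G \<delta> where M: "M = (Q, G, \<delta>)" by (cases M) auto
  obtain q h tp where c: "c = (q, h, tp)" by (cases c) auto
  have q: "q < Q" "\<forall>i. tp i < G" using inv unfolding tm_inv_def M c by auto
  obtain q' a' d where dl: "\<delta> q (tp h) = (q', a', d)" by (cases "\<delta> q (tp h)") auto
  have "fst (\<delta> q (tp h)) < Q \<and> fst (snd (\<delta> q (tp h))) < G"
    using wf q unfolding wf_tm_def M by auto
  then have "q' < Q" "a' < G" using dl by auto
  then show ?thesis using q unfolding tm_inv_def tm_step_def M c by (auto simp: dl)
qed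

lemma tm_step_eq_of_table_eq:
  assumes "tm_table M = tm_table M'" "tm_inv M c"
  shows "tm_step M c = tm_step M' c"
proof -
  obtain Q G \<delta> where M: "M = (Q, G, \<delta>)" by (cases M) auto
  obtain Q' G' \<delta>' where M': "M' = (Q', G', \<delta>')" by (cases M') auto
  obtain q h tp where c: "c = (q, h, tp)" by (cases c) auto
  have QG: "Q' = Q" "G' = G" and tab: "map (\<lambda>q. map (\<delta> q) [0..<G]) [0..<Q] = map (\<lambda>q. map (\<delta>' q) [0..<G]) [0..<Q]"
    using assms(1) unfolding M M' tm_table_def by auto
  have q: "q < Q" "tp h < G" using assms(2) unfolding tm_inv_def M c by auto
  have "\<delta> q (tp h) = \<delta>' q (tp h)"
    using arg_cong[OF tab, of "\<lambda>l. l ! q ! tp h"] q by simp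
  then show ?thesis unfolding M M' c tm_step_def QG by simp
qed

lemma tm_runs_eq_of_table_eq:
  assumes "wf_tm M" "tm_table M = tm_table M'"
  shows "(tm_step M ^^ t) (tm_init x) = (tm_step M' ^^ t) (tm_init x) \<and> tm_inv M ((tm_step M ^^ t) (tm_init x))"
proof (induction t)
  case 0 then show ?case using tm_inv_init[OF assms(1)] by simp
next
  case (Suc t)
  define c where "c = (tm_step M ^^ t) (tm_init x)"
  have c: "c = (tm_step M' ^^ t) (tm_init x)" "tm_inv M c" using Suc c_def by auto
  have "(tm_step M ^^ Suc t) (tm_init x) = tm_step M c" unfolding c_def by simp
  moreover have "(tm_step M' ^^ Suc t) (tm_init x) = tm_step M' c" using c(1) by simp
  ultimately show ?case using tm_step_eq_of_table_eq[OF assms(2) c(2)] tm_inv_step[OF assms(1) c(2)] by simp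
qed

lemma tm_step_halted: "fst c = 1 \<Longrightarrow> tm_step M c = c"
  unfolding tm_step_def by (cases M; cases c) auto

lemma tm_run_halted:
  assumes "fst ((tm_step M ^^ t) c) = 1"
  shows "(tm_step M ^^ (t + j)) c = (tm_step M ^^ t) c"
proof (induction j)
  case 0 then show ?case by simp
next
  case (Suc j)
  have "(tm_step M ^^ (t + Suc j)) c = tm_step M ((tm_step M ^^ (t + j)) c)" by simp
  also have "\<dots> = tm_step M ((tm_step M ^^ t) c)" using Suc by simp
  also have "\<dots> = (tm_step M ^^ t) c" using tm_step_halted[OF assms] .
  finally show ?case .
qed

lemma computes_eq_of_table_eq:
  assumes "wf_tm M" "wf_tm M'" "tm_table M = tm_table M'" "computes_in_time M f T" "computes_in_time M' g T'"
  shows "f = g"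
proof
  fix x
  obtain t where t: "fst ((tm_step M ^^ t) (tm_init x)) = 1" "tm_output (snd (snd ((tm_step M ^^ t) (tm_init x)))) = f x"
    using assms(4) unfolding computes_in_time_def by blast
  obtain t' where t': "fst ((tm_step M' ^^ t') (tm_init x)) = 1" "tm_output (snd (snd ((tm_step M' ^^ t') (tm_init x)))) = g x"
    using assms(5) unfolding computes_in_time_def by blast
  have "(tm_step M ^^ (t + t')) (tm_init x) = (tm_step M ^^ t) (tm_init x)" using tm_run_halted[OF t(1)] .
  moreover have "(tm_step M' ^^ (t' + t)) (tm_init x) = (tm_step M' ^^ t') (tm_init x)" using tm_run_halted[OF t'(1)] .
  moreover have "(tm_step M ^^ (t + t')) (tm_init x) = (tm_step M' ^^ (t + t')) (tm_init x)"
    using tm_runs_eq_of_table_eq[OF assms(1,3)] by blast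
  ultimately show "f x = g x" using t t' by (simp add: add.commute)
qed

lemma countable_poly_time_computable: "countable {f. poly_time_computable f}"
proof (rule countable_image_inj_on)
  define table where "table f = (SOME p. \<exists>M c k. wf_tm M \<and> computes_in_time M f (\<lambda>n. c * n ^ k + c) \<and> tm_table M = p)" for f
  have table_of: "\<exists>M c k. wf_tm M \<and> computes_in_time M f (\<lambda>n. c * n ^ k + c) \<and> tm_table M = table f"
    if "poly_time_computable f" for f
  proof -
    have "\<exists>p M c k. wf_tm M \<and> computes_in_time M f (\<lambda>n. c * n ^ k + c) \<and> tm_table M = p"
      using that unfolding poly_time_computable_def by blast
    then show ?thesis unfolding table_def by (rule someI_ex)
  qed
  show "inj_on table {f. poly_time_computable f}"
  proof (rule inj_onI)
    fix f g assume f: "f \<in> {f. poly_time_computable f}" and g: "g \<in> {f. poly_time_computable f}" and e: "table f = table g"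
    obtain M c k where M: "wf_tm M" "computes_in_time M f (\<lambda>n. c * n ^ k + c)" "tm_table M = table f" using table_of f by blast
    obtain M' c' k' where M': "wf_tm M'" "computes_in_time M' g (\<lambda>n. c' * n ^ k' + c')" "tm_table M' = table g" using table_of g by blast
    show "f = g" using computes_eq_of_table_eq[OF M(1) M'(1) _ M(2) M'(2)] M(3) M'(3) e by simp
  qed
  show "countable (table ` {f. poly_time_computable f})" by simp
qed

section \<open>The separation\<close>

definition tilted_qubit :: "real \<Rightarrow> complex mat" where
  "tilted_qubit b = qubit (sqrt (1 - (b/2)^2)) (b/2)"

definition state_prep_problem :: "real \<Rightarrow> bool list set \<Rightarrow> usp" where
  "state_prep_problem b S = (\<lambda>x. (0, 1, if x \<in> S then tilted_qubit b else qubit 1 0))"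

lemma tilted_qubit_coeffs:
  assumes "0 \<le> b" "b \<le> 2" shows "(sqrt (1 - (b/2)^2))^2 + (b/2)^2 = 1"
proof -
  have "(b/2)^2 \<le> 1" using assms by (simp add: power_le_one)
  then show ?thesis by simp
qed

lemma state_prep_problem_state:
  assumes "0 \<le> b" "b \<le> 2" "\<psi> = (if x \<in> S then tilted_qubit b else qubit 1 0)"
  shows "\<psi> \<in> carrier_mat 2 1" "adj \<psi> * \<psi> = 1\<^sub>m 1"
  using assms qubit_carrier_mat qubit_unit[OF tilted_qubit_coeffs[OF assms(1,2)]] qubit_unit[of 1 0]
  unfolding tilted_qubit_def by auto

lemma capply_anc_one: "capply 0 [Anc] (1\<^sub>m 1) = qubit 1 0 * adj (qubit 1 0)"
proof -
  have "anc_mat 0 = qubit 1 0" by (rule eq_matI) (auto simp: anc_mat_def qubit_def)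
  then have "capply 0 [Anc] (1\<^sub>m 1) = qubit 1 0 * 1\<^sub>m 1 * adj (qubit 1 0) + 0\<^sub>m 2 2"
    by (simp add: apply_instr_def kraus_apply_def)
  then show ?thesis
    using right_add_zero_mat[OF mult_carrier_mat[OF qubit_carrier_mat adj_carrier_mat[OF qubit_carrier_mat]]]
    by simp
qed

lemma state_prep_problem_in_unitaryBQP:
  assumes b: "0 \<le> b" "b \<le> 2"
  shows "state_prep_problem b S \<in> unitaryBQP (\<lambda>_. b)"
  unfolding unitaryBQP_def
proof (intro CollectI conjI exI[of _ "\<lambda>_. (0, [Anc])"])
  show "is_usp (state_prep_problem b S)"
    unfolding is_usp_def state_prep_problem_def partial_isometry_def case_prod_conv
  proof
    fix x
    define \<psi> where "\<psi> = (if x \<in> S then tilted_qubit b else qubit 1 0)"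
    show "\<exists>V P. isometry (2 ^ 1) (2 ^ 0) V \<and> projector (2 ^ 0) P \<and> (if x \<in> S then tilted_qubit b else qubit 1 0) = V * P"
      unfolding \<psi>_def[symmetric] using state_prep_problem_state[OF b \<psi>_def]
      by (intro exI[of _ \<psi>] exI[of _ "1\<^sub>m 1"]) (auto simp: isometry_def projector_def)
  qed
  have "enc_circ \<circ> (\<lambda>_::bool list. (0::nat, [Anc])) = (\<lambda>_. anc_code)" unfolding anc_code_def by auto
  then show "poly_time_computable (enc_circ \<circ> (\<lambda>_. (0, [Anc])))"
    using poly_time_computable_anc_code by simp
  show "implements_with_error (\<lambda>_. (0, [Anc])) (state_prep_problem b S) (\<lambda>_. b)"
    unfolding implements_with_error_def
  proof (intro allI)
    fix x
    define \<psi> where "\<psi> = (if x \<in> S then tilted_qubit b else qubit 1 0)"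
    note \<psi> = state_prep_problem_state[OF b \<psi>_def]
    have "trace_norm (qubit 1 0 * adj (qubit 1 0) - \<psi> * adj \<psi>) \<le> b"
      using trace_norm_qubit_outer_diff[OF tilted_qubit_coeffs[OF b]] trace_norm_qubit_outer_diff[of 1 0] b
      unfolding \<psi>_def tilted_qubit_def by auto
    moreover have "diamond_norm 1 (2^1) (\<lambda>\<rho>. capply 0 [Anc] \<rho> - \<psi> * \<rho> * adj \<psi>) =
        trace_norm (capply 0 [Anc] (1\<^sub>m 1) - \<psi> * adj \<psi>)"
      by (rule diamond_norm_state_prep_error) (use \<psi> channel_completion_state_prep[OF \<psi>] in simp_all)
    ultimately have "diamond_norm 1 2 (\<lambda>\<rho>. capply 0 [Anc] \<rho> - \<psi> * \<rho> * adj \<psi>) \<le> b"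
      unfolding capply_anc_one by simp
    then show "case state_prep_problem b S x of (n, m, U) \<Rightarrow>
       fst (0, [Anc]) = n \<and> cvalid n (snd (0::nat, [Anc])) \<and> cwidth n (snd (0::nat, [Anc])) = m \<and>
       (\<exists>\<Phi>. channel_completion (2 ^ n) (2 ^ m) U \<Phi> \<and>
        diamond_norm (2 ^ n) (2 ^ m) (\<lambda>\<rho>. capply n (snd (0::nat, [Anc])) \<rho> - \<Phi> \<rho>) \<le> b)"
      unfolding state_prep_problem_def \<psi>_def[symmetric] using channel_completion_state_prep[OF \<psi>] by auto
  qed
qed

lemma implements_state_prep_entry_bound:
  assumes C: "implements_with_error C (state_prep_problem b S) (\<lambda>_. a)" and b: "0 \<le> b" "b \<le> 2"
    and \<psi>: "\<psi> = (if x \<in> S then tilted_qubit b else qubit 1 0)"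
  shows "cmod ((capply 0 (snd (C x)) (1\<^sub>m 1)) $$ (0,0) - (\<psi> * adj \<psi>) $$ (0,0)) \<le> a"
proof -
  note \<psi>_state = state_prep_problem_state[OF b \<psi>]
  obtain \<Phi> where width: "cwidth 0 (snd (C x)) = 1" and \<Phi>: "channel_completion 1 2 \<psi> \<Phi>"
    and err: "diamond_norm 1 2 (\<lambda>\<rho>. capply 0 (snd (C x)) \<rho> - \<Phi> \<rho>) \<le> a"
    using spec[OF C[unfolded implements_with_error_def], of x] unfolding state_prep_problem_def \<psi>[symmetric]
    by auto
  define D where "D = capply 0 (snd (C x)) (1\<^sub>m 1) - \<psi> * adj \<psi>"
  have Dc: "D \<in> carrier_mat 2 2"
    unfolding D_def using \<psi>_state(1) by (intro minus_carrier_mat mult_carrier_mat adj_carrier_mat)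
  have "trace_norm D \<le> a"
    using diamond_norm_state_prep_error[of \<psi> 1] \<psi>_state width \<Phi> err unfolding D_def by simp
  moreover have "D $$ (0,0) = (capply 0 (snd (C x)) (1\<^sub>m 1)) $$ (0,0) - (\<psi> * adj \<psi>) $$ (0,0)"
    unfolding D_def using \<psi>_state(1) by simp
  ultimately show ?thesis using norm_entry_le_trace_norm[OF Dc, of 0 0] by simp
qed

text \<open>The \<open>(0,0)\<close> entries of \<open>|0\<rangle>\<langle>0|\<close> and of the tilted state differ by \<open>(b/2)\<^sup>2\<close>, so a circuit
  approximating both to within \<open>a\<close> forces \<open>(b/2)\<^sup>2 \<le> 2 a\<close>.\<close>
lemma implements_state_prep_unique:
  assumes S: "implements_with_error C (state_prep_problem b S) (\<lambda>_. a)"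
    and T: "implements_with_error C (state_prep_problem b T) (\<lambda>_. a)"
    and b: "0 \<le> b" "b \<le> 2" and ab: "8 * a < b^2"
  shows "S = T"
proof (rule ccontr)
  have swap: False if S': "implements_with_error C (state_prep_problem b S') (\<lambda>_. a)"
    and T': "implements_with_error C (state_prep_problem b T') (\<lambda>_. a)" and x: "x \<in> S'" "x \<notin> T'" for S' T' x
  proof -
    define r where "r = (capply 0 (snd (C x)) (1\<^sub>m 1)) $$ (0,0)"
    define c where "c = sqrt (1 - (b/2)^2)"
    have "cmod (r - of_real (c * c)) \<le> a"
      using implements_state_prep_entry_bound[OF S' b refl, of x] x index_qubit_outer[of 0 0 c "b/2"]
      unfolding r_def c_def tilted_qubit_def by simp
    moreover have "cmod (r - 1) \<le> a"
      using implements_state_prep_entry_bound[OF T' b refl, of x] x index_qubit_outer[of 0 0 1 0]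
      unfolding r_def by simp
    moreover have "cmod ((r - of_real (c * c)) - (r - 1)) = (b/2)^2"
    proof -
      have "(r - of_real (c * c)) - (r - 1) = of_real (1 - c * c)" by simp
      moreover have "1 - c * c = (b/2)^2"
        using tilted_qubit_coeffs[OF b] unfolding c_def by (simp add: power2_eq_square)
      ultimately show ?thesis by (simp only: norm_of_real) simp
    qed
    ultimately have "(b/2)^2 \<le> 2 * a"
      using norm_triangle_ineq4[of "r - of_real (c * c)" "r - 1"] by simp
    then show False using ab by (simp add: power_divide)
  qed
  assume "S \<noteq> T"
  then obtain x where "x \<in> S \<and> x \<notin> T \<or> x \<in> T \<and> x \<notin> S" by blast
  then show False using swap[OF S T] swap[OF T S] by blast
qed

lemma countable_poly_time_circuit_families:
  "countable {C :: bool list \<Rightarrow> nat \<times> instr list. poly_time_computable (enc_circ \<circ> C)}"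
proof (rule countable_image_inj_on)
  show "countable ((\<lambda>C. enc_circ \<circ> C) ` {C. poly_time_computable (enc_circ \<circ> C)})"
    by (rule countable_subset[OF _ countable_poly_time_computable]) auto
  show "inj_on (\<lambda>C. enc_circ \<circ> C) {C. poly_time_computable (enc_circ \<circ> C)}"
    using inj_enc_circ by (auto intro!: inj_onI simp: fun_eq_iff inj_eq)
qed

lemma countable_state_prep_in_unitaryBQP:
  assumes b: "0 \<le> b" "b \<le> 2" and ab: "8 * a < b^2"
  shows "countable {S. state_prep_problem b S \<in> unitaryBQP (\<lambda>_. a)}"
proof (rule countable_image_inj_on)
  define circ where "circ S = (SOME C. poly_time_computable (enc_circ \<circ> C) \<and>
    implements_with_error C (state_prep_problem b S) (\<lambda>_. a))" for S
  have circ: "poly_time_computable (enc_circ \<circ> circ S) \<and> implements_with_error (circ S) (state_prep_problem b S) (\<lambda>_. a)"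
    if "state_prep_problem b S \<in> unitaryBQP (\<lambda>_. a)" for S
  proof -
    have "\<exists>C. poly_time_computable (enc_circ \<circ> C) \<and> implements_with_error C (state_prep_problem b S) (\<lambda>_. a)"
      using that unfolding unitaryBQP_def by blast
    then show ?thesis unfolding circ_def by (rule someI_ex)
  qed
  show "countable (circ ` {S. state_prep_problem b S \<in> unitaryBQP (\<lambda>_. a)})"
    by (rule countable_subset[OF _ countable_poly_time_circuit_families]) (use circ in blast)
  show "inj_on circ {S. state_prep_problem b S \<in> unitaryBQP (\<lambda>_. a)}"
  proof (rule inj_onI)
    fix S T assume "S \<in> {S. state_prep_problem b S \<in> unitaryBQP (\<lambda>_. a)}"
      "T \<in> {S. state_prep_problem b S \<in> unitaryBQP (\<lambda>_. a)}" "circ S = circ T"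
    then show "S = T"
      using circ[of S] circ[of T] implements_state_prep_unique[OF _ _ b ab, of "circ S" S T] by simp
  qed
qed

lemma uncountable_bool_list_sets: "\<not> countable (UNIV :: bool list set set)"
proof
  assume "countable (UNIV :: bool list set set)"
  then have surj: "range (from_nat_into (UNIV :: bool list set set)) = UNIV" by simp
  have "range (\<lambda>l. from_nat_into (UNIV :: bool list set set) (length l)) = range (from_nat_into UNIV)"
    by (auto simp: image_iff) (metis length_replicate)
  then have "(\<lambda>l. from_nat_into (UNIV :: bool list set set) (length l)) ` UNIV = Pow UNIV"
    using surj by simp
  then show False using Cantors_theorem[of "UNIV :: bool list set"] by metis
qed

theorem mainTheorem6:
  fixes \<alpha> \<beta> :: real
  assumes "0 < \<alpha>" and "\<alpha> < \<beta>" and "\<beta> < 1" and "\<beta> > 2 * sqrt (3 * \<alpha>)"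
  shows "unitaryBQP (\<lambda>_. \<alpha>) \<noteq> unitaryBQP (\<lambda>_. \<beta>)"
proof
  assume eq: "unitaryBQP (\<lambda>_. \<alpha>) = unitaryBQP (\<lambda>_. \<beta>)"
  have \<beta>: "0 \<le> \<beta>" "\<beta> \<le> 2" using assms by simp_all
  have "(2 * sqrt (3 * \<alpha>))^2 < \<beta>^2"
    using assms(1,4) by (intro power_strict_mono) auto
  then have "8 * \<alpha> < \<beta>^2" using assms(1) by (simp add: power_mult_distrib)
  from countable_state_prep_in_unitaryBQP[OF \<beta> this]
  have "countable {S. state_prep_problem \<beta> S \<in> unitaryBQP (\<lambda>_. \<beta>)}"
    by (simp only: eq)
  moreover have "{S. state_prep_problem \<beta> S \<in> unitaryBQP (\<lambda>_. \<beta>)} = UNIV"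
    using state_prep_problem_in_unitaryBQP[OF \<beta>] by blast
  ultimately show False using uncountable_bool_list_sets by simp
qed

end
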